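(* $\mathbf T_{m+1}$ is a Poisson submanifold of $(\mathfrak g,{\rm PB}_2({\rm A}_1,{\rm A}_2,{\rm S}))$, and the induced bracket is given, for $1\le i,j\le m$ and all $k$, by $\{b_k,b_{k+1}\}_2=-a_k^{(1)}$; $\{b_k,a_{k+1}^{(j)}\}_2=-a_k^{(j+1)}$, $\{a_k^{(j)},b_{k+j+1}\}_2=-a_k^{(j+1)}$; $\{b_k,a_k^{(j)}\}_2=-b_ka_k^{(j)}$, $\{a_k^{(j)},b_{k+j}\}_2=-a_k^{(j)}b_{k+j}$; $\{a_k^{(i)},a_{k+i+1}^{(j)}\}_2=-a_k^{(i+j+1)}$; for $i<j$: $\{a_k^{(i)},a_k^{(j)}\}_2=-a_k^{(i)}a_k^{(j)}$ and $\{a_k^{(j)},a_{k+j-i}^{(i)}\}_2=-a_k^{(j)}a_{k+j-i}^{(i)}$; for $i\le j$ and $1\le\ell\le i$: $\{a_k^{(i)},a_{k+\ell}^{(j)}\}_2=-a_k^{(i)}a_{k+\ell}^{(j)}-a_k^{(j+\ell)}a_{k+\ell}^{(i-\ell)}$; for $i\le j$ and $j-i+1\le\ell\le j$: $\{a_k^{(j)},a_{k+\ell}^{(i)}\}_2=-a_k^{(j)}a_{k+\ell}^{(i)}-a_k^{(i+\ell)}a_{k+\ell}^{(j-\ell)}$; all other brackets between coordinate functions (other than those obtained by antisymmetry) vanish. (Here $N\ge2m+2$, so that the index patterns are distinct modulo $N$.)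
   Context: Periodic lattice setting. Fix integers $N\ge2$, $m\ge1$, $\omega=e^{2\pi i/N}$, $\Omega=\mathrm{diag}(1,\omega,\dots,\omega^{N-1})$. $\mathfrak g=\{X(\lambda)\in gl(N)[\lambda,\lambda^{-1}]:\Omega X(\lambda)\Omega^{-1}=X(\omega\lambda)\}$ (finite sums $\sum_p\lambda^p\sum_{j-k\equiv p\,(\mathrm{mod}\,N)}x^{(p)}_{jk}E_{jk}$), matrix indices and lattice subscripts modulo $N$; scalar product $\langle X,Y\rangle$ = coefficient of $\lambda^0$ in $\mathrm{tr}(XY)$. $\mathfrak g_p$ = elements $\lambda^p\sum_{j-k\equiv p}x_{jk}E_{jk}$; $P_0,P_{>0},P_{<0}$ etc. are the projections onto $\mathfrak g_0$, $\oplus_{p>0}\mathfrak g_p$, $\oplus_{p<0}\mathfrak g_p$, etc. ${\rm R}_0=P_{>0}-P_{<0}$. $W$ is linear with $W=W\circ P_0$ and $W(E_{kk})=\sum_{j=1}^N\mathrm{sgn}(k-j)E_{jj}$. ${\rm A}_1={\rm R}_0+W$, ${\rm A}_2={\rm R}_0-W$, ${\rm S}=P_0-W$, ${\rm S}^*=P_0+W$. Gradient: $\langle\nabla\varphi(L),M\rangle=\frac{d}{d\varepsilon}\varphi(L+\varepsilon M)|_{\varepsilon=0}$; $d\varphi=L\nabla\varphi$, $d'\varphi=\nabla\varphi L$. ${\rm PB}_2({\rm A}_1,{\rm A}_2,{\rm S})$: $\{\varphi,\psi\}_2(L)=\frac12\langle{\rm A}_1(d'\varphi),d'\psi\rangle-\frac12\langle{\rm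 A}_2(d\varphi),d\psi\rangle+\frac12\langle{\rm S}(d\varphi),d'\psi\rangle-\frac12\langle{\rm S}^*(d'\varphi),d\psi\rangle$. $\mathcal E=\lambda\sum_kE_{k+1,k}$; $\mathbf T_{m+1}$ = set of $T=\mathcal E+\sum_kb_kE_{kk}+\sum_{j=1}^m\lambda^{-j}\sum_ka_k^{(j)}E_{k,k+j}$; coordinate functions $b_k(X)$ = coefficient of $\lambda^0E_{kk}$, $a_k^{(j)}(X)$ = coefficient of $\lambda^{-j}E_{k,k+j}$. Convention: $a_k^{(0)}=b_k$, $a_k^{(i)}=0$ for $i<0$ or $i>m$. *)

theory Defs
  imports Complex_Main
begin

text \<open>An element X(lambda) = sum_p lambda^p X_p is encoded
  as the coefficient function  X p j k  = coefficient of lambda^p E_{jk}, matrix indices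
  j, k in {0..N-1} (a shift of the paper's 1..N; lattice subscripts are taken modulo N).\<close>

type_synonym lmat = "int \<Rightarrow> nat \<Rightarrow> nat \<Rightarrow> complex"

definition lsupp :: "lmat \<Rightarrow> int set" where
  "lsupp X = {p. \<exists>j k. X p j k \<noteq> 0}"

definition gset :: "nat \<Rightarrow> lmat set" where
  "gset N = {X. finite (lsupp X) \<and>
      (\<forall>p j k. X p j k \<noteq> 0 \<longrightarrow> j < N \<and> k < N \<and> (int j - int k - p) mod int N = 0)}"

definition ladd :: "lmat \<Rightarrow> lmat \<Rightarrow> lmat" where
  "ladd X Y = (\<lambda>p j k. X p j k + Y p j k)"

definition lsmul :: "complex \<Rightarrow> lmat \<Rightarrow> lmat" where
  "lsmul c X = (\<lambda>p j k. c * X p j k)"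

definition lmul :: "nat \<Rightarrow> lmat \<Rightarrow> lmat \<Rightarrow> lmat" where
  "lmul N X Y = (\<lambda>p j k. \<Sum>q\<in>lsupp X. \<Sum>l<N. X q j l * Y (p - q) l k)"

definition lpair :: "nat \<Rightarrow> lmat \<Rightarrow> lmat \<Rightarrow> complex" where
  "lpair N X Y = (\<Sum>j<N. lmul N X Y 0 j j)"

definition P0 :: "lmat \<Rightarrow> lmat" where
  "P0 X = (\<lambda>p j k. if p = 0 then X p j k else 0)"

definition Ppos :: "lmat \<Rightarrow> lmat" where
  "Ppos X = (\<lambda>p j k. if p > 0 then X p j k else 0)"

definition Pneg :: "lmat \<Rightarrow> lmat" where
  "Pneg X = (\<lambda>p j k. if p < 0 then X p j k else 0)"

definition R0 :: "lmat \<Rightarrow> lmat" where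
  "R0 X = (\<lambda>p j k. Ppos X p j k - Pneg X p j k)"

text \<open>W = W o P0, W(E_kk) = sum_j sgn(k - j) E_jj  (g_0 consists of diagonal matrices).\<close>
definition Wop :: "nat \<Rightarrow> lmat \<Rightarrow> lmat" where
  "Wop N X = (\<lambda>p j k. if p = 0 \<and> j = k \<and> j < N
       then (\<Sum>i<N. of_int (sgn (int i - int j)) * P0 X 0 i i) else 0)"

definition A1op :: "nat \<Rightarrow> lmat \<Rightarrow> lmat" where
  "A1op N X = (\<lambda>p j k. R0 X p j k + Wop N X p j k)"

definition A2op :: "nat \<Rightarrow> lmat \<Rightarrow> lmat" where
  "A2op N X = (\<lambda>p j k. R0 X p j k - Wop N X p j k)"

definition Sop :: "nat \<Rightarrow> lmat \<Rightarrow> lmat" where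
  "Sop N X = (\<lambda>p j k. P0 X p j k - Wop N X p j k)"

definition Sstar :: "nat \<Rightarrow> lmat \<Rightarrow> lmat" where
  "Sstar N X = (\<lambda>p j k. P0 X p j k + Wop N X p j k)"

definition has_grad :: "nat \<Rightarrow> (lmat \<Rightarrow> complex) \<Rightarrow> lmat \<Rightarrow> lmat \<Rightarrow> bool" where
  "has_grad N \<phi> L G \<longleftrightarrow> G \<in> gset N \<and>
     (\<forall>M\<in>gset N. ((\<lambda>\<epsilon>. \<phi> (ladd L (lsmul \<epsilon> M))) has_field_derivative lpair N G M) (at 0))"

definition grad :: "nat \<Rightarrow> (lmat \<Rightarrow> complex) \<Rightarrow> lmat \<Rightarrow> lmat" where
  "grad N \<phi> L = (THE G. has_grad N \<phi> L G)"

definition dl :: "nat \<Rightarrow> (lmat \<Rightarrow> complex) \<Rightarrow> lmat \<Rightarrow> lmat" where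
  "dl N \<phi> L = lmul N L (grad N \<phi> L)"

definition dr :: "nat \<Rightarrow> (lmat \<Rightarrow> complex) \<Rightarrow> lmat \<Rightarrow> lmat" where
  "dr N \<phi> L = lmul N (grad N \<phi> L) L"

definition PB2 :: "nat \<Rightarrow> (lmat \<Rightarrow> complex) \<Rightarrow> (lmat \<Rightarrow> complex) \<Rightarrow> lmat \<Rightarrow> complex" where
  "PB2 N \<phi> \<psi> L =
      1/2 * lpair N (A1op N (dr N \<phi> L)) (dr N \<psi> L)
    - 1/2 * lpair N (A2op N (dl N \<phi> L)) (dl N \<psi> L)
    + 1/2 * lpair N (Sop N (dl N \<phi> L)) (dr N \<psi> L)
    - 1/2 * lpair N (Sstar N (dr N \<phi> L)) (dl N \<psi> L)"

text \<open>T is a Poisson submanifold (T an affine subset of g): at every point L of T the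
  Hamiltonian vector field of every function phi having a gradient at L is tangent to T,
  i.e. there is a vector V with L + t V in T for all t such that for every psi having a
  gradient at L, d/d eps psi(L + eps V) at 0 equals B phi psi L.\<close>
definition poisson_submanifold ::
    "nat \<Rightarrow> ((lmat \<Rightarrow> complex) \<Rightarrow> (lmat \<Rightarrow> complex) \<Rightarrow> lmat \<Rightarrow> complex) \<Rightarrow> lmat set \<Rightarrow> bool" where
  "poisson_submanifold N B T \<longleftrightarrow> T \<subseteq> gset N \<and>
     (\<forall>L\<in>T. \<forall>\<phi>. (\<exists>G. has_grad N \<phi> L G) \<longrightarrow>
        (\<exists>V. (\<forall>t. ladd L (lsmul t V) \<in> T) \<and>
             (\<forall>\<psi>. (\<exists>H. has_grad N \<psi> L H) \<longrightarrow>
                ((\<lambda>\<epsilon>. \<psi> (ladd L (lsmul \<epsilon> V))) has_field_derivative B \<phi> \<psi> L) (at 0))))"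

text \<open>T_{m+1}: T = calE + sum_k b_k E_kk + sum_{j=1}^m lambda^{-j} sum_k a^{(j)}_k E_{k,k+j},
  where a j k stands for a^{(j)}_k and b k for b_k.\<close>
definition Tmat :: "nat \<Rightarrow> nat \<Rightarrow> (nat \<Rightarrow> complex) \<Rightarrow> (nat \<Rightarrow> nat \<Rightarrow> complex) \<Rightarrow> lmat" where
  "Tmat N m b a = (\<lambda>p j k. if j < N \<and> k < N then
       (if p = 1 \<and> int j = (int k + 1) mod int N then 1
        else if p = 0 \<and> j = k then b k
        else if 1 \<le> - p \<and> - p \<le> int m \<and> int k = (int j - p) mod int N then a (nat (- p)) j
        else 0)
     else 0)"

definition Tset :: "nat \<Rightarrow> nat \<Rightarrow> lmat set" where
  "Tset N m = {L. \<exists>b a. L = Tmat N m b a}"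

text \<open>Coordinate functions with the convention a^{(0)}_k = b_k and a^{(i)}_k = 0 for
  i < 0 or i > m: coord N m i k X = a^{(i)}_k(X) (lattice subscript k taken mod N).\<close>
definition coord :: "nat \<Rightarrow> nat \<Rightarrow> int \<Rightarrow> int \<Rightarrow> lmat \<Rightarrow> complex" where
  "coord N m i k X =
     (if i = 0 then X 0 (nat (k mod int N)) (nat (k mod int N))
      else if 1 \<le> i \<and> i \<le> int m then X (- i) (nat (k mod int N)) (nat ((k + i) mod int N))
      else 0)"

text \<open>The index patterns (i,k),(j,l) of the brackets {a^{(i)}_k, a^{(j)}_l} listed
  explicitly in the theorem (before antisymmetry).\<close>
definition listed :: "nat \<Rightarrow> nat \<Rightarrow> int \<Rightarrow> int \<Rightarrow> int \<Rightarrow> int \<Rightarrow> bool" where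
  "listed N m i k j l \<longleftrightarrow>
     (let c = (\<lambda>d. (l - k - d) mod int N = 0) in
        (i = 0 \<and> j = 0 \<and> c 1)
      \<or> (i = 0 \<and> 1 \<le> j \<and> j \<le> int m \<and> c 1)
      \<or> (1 \<le> i \<and> i \<le> int m \<and> j = 0 \<and> c (i + 1))
      \<or> (i = 0 \<and> 1 \<le> j \<and> j \<le> int m \<and> c 0)
      \<or> (1 \<le> i \<and> i \<le> int m \<and> j = 0 \<and> c i)
      \<or> (1 \<le> i \<and> i \<le> int m \<and> 1 \<le> j \<and> j \<le> int m \<and> c (i + 1))
      \<or> (1 \<le> i \<and> i < j \<and> j \<le> int m \<and> c 0)
      \<or> (1 \<le> j \<and> j < i \<and> i \<le> int m \<and> c (i - j))
      \<or> (1 \<le> i \<and> i \<le> j \<and> j \<le> int m \<and> (\<exists>r. 1 \<le> r \<and> r \<le> i \<and> c r))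
      \<or> (1 \<le> j \<and> j \<le> i \<and> i \<le> int m \<and> (\<exists>r. i - j + 1 \<le> r \<and> r \<le> i \<and> c r)))"

end

theory Submission
  imports Defs
begin

text \<open>PB2 depends on phi and psi only through their gradients, bilinearly, and the gradient of
  the coordinate function a^(i)_k is the elementary loop matrix lambda^i E_{k+i,k}. At a point T
  of T_{m+1} the bracket of two elementary matrices is computed explicitly: it is a convolution
  of the coefficients of T weighted by sgn(i - s) + sgn(j - s), coming from R_0, plus a
  correction coming from W and P_0 which only involves the diagonal coefficients. This vanishes
  when the degree j of the second matrix lies outside [0, m] (for j = -1 the two parts cancel),
  so the Hamiltonian vector field of every function only moves the coordinates b_k and a^(j)_k,
  i.e. it is tangent to T_{m+1}. For the coordinate brackets themselves, N \<ge> 2m + 2 leaves at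
  most one congruent term in the convolution, and both the listed formulas and the vanishing of
  all other brackets are read off from the closed formula.\<close>

section \<open>Elementary loop matrices and gradients\<close>

definition resid :: "nat \<Rightarrow> int \<Rightarrow> nat" where
  "resid N x = nat (x mod int N)"

definition elem :: "nat \<Rightarrow> int \<Rightarrow> int \<Rightarrow> lmat" where
  "elem N p a = (\<lambda>q j k. if q = p \<and> j = resid N a \<and> k = resid N (a - p) then 1 else 0)"

lemma resid_less: "0 < N \<Longrightarrow> resid N x < N"
  unfolding resid_def by (simp add: nat_less_iff)

lemma of_nat_resid: "0 < N \<Longrightarrow> int (resid N x) = x mod int N"
  unfolding resid_def by simp

lemma resid_eq_iff: "0 < N \<Longrightarrow> resid N x = resid N y \<longleftrightarrow> x mod int N = y mod int N"
  unfolding resid_def by (metis of_nat_resid nat_int resid_def)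

lemma eq_resid_iff: "0 < N \<Longrightarrow> k = resid N x \<longleftrightarrow> int k = x mod int N"
  unfolding resid_def by auto

lemma resid_of_nat: "u < N \<Longrightarrow> resid N (int u) = u"
  unfolding resid_def by simp

lemma resid_resid: "0 < N \<Longrightarrow> resid N (int (resid N a)) = resid N a"
  by (simp add: resid_def)

lemma resid_resid_diff: "0 < N \<Longrightarrow> resid N (int (resid N a) - q) = resid N (a - q)"
  by (simp add: resid_def of_nat_resid mod_diff_left_eq)

lemma lsupp_elem: "0 < N \<Longrightarrow> lsupp (elem N p a) = {p}"
  unfolding lsupp_def elem_def by auto

lemma gset_pattern_iff:
  assumes "k < N"
  shows "(int j - int k - p) mod int N = 0 \<longleftrightarrow> k = resid N (int j - p)"
proof -
  have "(int j - int k - p) mod int N = 0 \<longleftrightarrow> int N dvd (int k - (int j - p))"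
    by (metis dvd_eq_mod_eq_0 dvd_minus_iff minus_diff_eq diff_diff_eq2 diff_diff_eq add.commute)
  also have "\<dots> \<longleftrightarrow> int k = (int j - p) mod int N"
    using assms by (simp flip: mod_eq_dvd_iff)
  finally show ?thesis
    using assms by (simp add: eq_resid_iff)
qed

lemma gset_nonzero_entry:
  assumes "X \<in> gset N" "X p j k \<noteq> 0"
  shows "j < N \<and> k < N \<and> k = resid N (int j - p)"
  using assms gset_pattern_iff unfolding gset_def by blast

lemma in_gsetI:
  assumes "finite (lsupp X)"
    and "\<And>p j k. X p j k \<noteq> 0 \<Longrightarrow> j < N \<and> k < N \<and> k = resid N (int j - p)"
  shows "X \<in> gset N"
  using assms gset_pattern_iff unfolding gset_def by blast

lemma gset_finite_lsupp: "X \<in> gset N \<Longrightarrow> finite (lsupp X)"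
  unfolding gset_def by auto

lemma elem_in_gset:
  assumes "0 < N"
  shows "elem N p a \<in> gset N"
proof (rule in_gsetI)
  show "finite (lsupp (elem N p a))"
    using assms by (simp add: lsupp_elem)
qed (use assms in \<open>auto simp: elem_def resid_less resid_resid_diff split: if_splits\<close>)

lemma elem_resid: "0 < N \<Longrightarrow> elem N q (int (resid N a)) = elem N q a"
  unfolding elem_def by (simp add: resid_resid resid_resid_diff)

lemma lmul_eq_sum_over:
  assumes "finite Q" "lsupp X \<subseteq> Q"
  shows "lmul N X Y p j k = (\<Sum>q\<in>Q. \<Sum>l<N. X q j l * Y (p - q) l k)"
  unfolding lmul_def
  by (rule sum.mono_neutral_left[OF assms]) (auto simp: lsupp_def)

lemma lpair_eq_sum_over:
  assumes "finite Q" "lsupp X \<subseteq> Q"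
  shows "lpair N X Y = (\<Sum>j<N. \<Sum>q\<in>Q. \<Sum>l<N. X q j l * Y (- q) l j)"
  unfolding lpair_def by (simp add: lmul_eq_sum_over[OF assms])

lemma if_one_zero_mult [simp]: "(if P then 1 else 0) * (y::'a::semiring_1) = (if P then y else 0)"
  by simp

lemma mult_if_one_zero [simp]: "(y::'a::semiring_1) * (if P then 1 else 0) = (if P then y else 0)"
  by simp

lemma sum_if_const [simp]: "(\<Sum>x\<in>A. if P then f x else 0) = (if P then sum f A else 0)"
  by simp

lemma sum_if_delta_cond:
  assumes "finite A" "\<And>x. C x \<Longrightarrow> x = x0"
  shows "(\<Sum>x\<in>A. if C x then f x else 0) = (if x0 \<in> A \<and> C x0 then f x0 else 0)"
proof -
  have "(\<Sum>x\<in>A. if C x then f x else 0) = (\<Sum>x\<in>A. if x = x0 then (if C x0 then f x0 else 0) else 0)"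
    by (rule sum.cong) (auto dest: assms(2))
  then show ?thesis
    using assms(1) by (simp add: sum.delta')
qed

lemma sum_if_conj_delta [simp]:
  assumes "finite A"
  shows "(\<Sum>x\<in>A. if P x \<and> x = x0 then f x else 0) = (if x0 \<in> A \<and> P x0 then f x0 else 0)"
    and "(\<Sum>x\<in>A. if P x \<and> Q x \<and> x = x0 then f x else 0) = (if x0 \<in> A \<and> P x0 \<and> Q x0 then f x0 else 0)"
    and "(\<Sum>x\<in>A. if x = x0 \<and> P x then f x else 0) = (if x0 \<in> A \<and> P x0 then f x0 else 0)"
    and "(\<Sum>x\<in>A. if P x \<and> x = x0 \<and> Q x then f x else 0) = (if x0 \<in> A \<and> P x0 \<and> Q x0 then f x0 else 0)"
  using sum_if_delta_cond[OF assms, of "\<lambda>x. P x \<and> x = x0" x0 f]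
    sum_if_delta_cond[OF assms, of "\<lambda>x. P x \<and> Q x \<and> x = x0" x0 f]
    sum_if_delta_cond[OF assms, of "\<lambda>x. x = x0 \<and> P x" x0 f]
    sum_if_delta_cond[OF assms, of "\<lambda>x. P x \<and> x = x0 \<and> Q x" x0 f]
  by auto

lemma sum_triple_delta:
  assumes "finite A" "finite B" "finite C"
  shows "(\<Sum>x\<in>A. \<Sum>y\<in>B. \<Sum>z\<in>C. if x = x0 \<and> y = y0 \<and> z = z0 then f x y z else 0)
       = (if x0 \<in> A \<and> y0 \<in> B \<and> z0 \<in> C then f x0 y0 z0 else 0)"
proof -
  have "(\<Sum>z\<in>C. if x = x0 \<and> y = y0 \<and> z = z0 then f x y z else 0)
       = (if x = x0 \<and> y = y0 then (if z0 \<in> C then f x y z0 else 0) else 0)" for x y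
    using assms by (cases "x = x0 \<and> y = y0") auto
  then have "(\<Sum>x\<in>A. \<Sum>y\<in>B. \<Sum>z\<in>C. if x = x0 \<and> y = y0 \<and> z = z0 then f x y z else 0)
     = (\<Sum>x\<in>A. \<Sum>y\<in>B. if x = x0 \<and> y = y0 then (if z0 \<in> C then f x y z0 else 0) else 0)"
    by simp
  also have "\<dots> = (\<Sum>x\<in>A. if x = x0 then (if y0 \<in> B \<and> z0 \<in> C then f x y0 z0 else 0) else 0)"
    using assms by (intro sum.cong refl) (auto simp: sum.delta')
  also have "\<dots> = (if x0 \<in> A \<and> y0 \<in> B \<and> z0 \<in> C then f x0 y0 z0 else 0)"
    using assms by (simp add: sum.delta')
  finally show ?thesis .
qed

lemma lpair_elem_right:
  assumes N: "0 < N" and X: "finite (lsupp X)"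
  shows "lpair N X (elem N q a) = X (-q) (resid N (a - q)) (resid N a)"
proof -
  have "lpair N X (elem N q a)
      = (\<Sum>j<N. \<Sum>r\<in>lsupp X \<union> {-q}. \<Sum>l<N. X r j l * elem N q a (- r) l j)"
    by (rule lpair_eq_sum_over) (use X in auto)
  also have "\<dots> = (\<Sum>j<N. \<Sum>r\<in>lsupp X \<union> {-q}. \<Sum>l<N.
      if j = resid N (a - q) \<and> r = -q \<and> l = resid N a then X r j l else 0)"
    by (intro sum.cong refl) (auto simp: elem_def)
  also have "\<dots> = X (-q) (resid N (a - q)) (resid N a)"
    using X by (subst sum_triple_delta) (auto simp: resid_less[OF N])
  finally show ?thesis .
qed

lemma lpair_elem_left:
  assumes N: "0 < N"
  shows "lpair N (elem N q a) Y = Y (-q) (resid N (a - q)) (resid N a)"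
proof -
  have "lpair N (elem N q a) Y = (\<Sum>j<N. \<Sum>r\<in>{q}. \<Sum>l<N. elem N q a r j l * Y (- r) l j)"
    by (rule lpair_eq_sum_over) (auto simp: lsupp_elem[OF N])
  also have "\<dots> = (\<Sum>j<N. \<Sum>r\<in>{q}. \<Sum>l<N.
      if j = resid N a \<and> r = q \<and> l = resid N (a - q) then Y (-r) l j else 0)"
    by (intro sum.cong refl) (auto simp: elem_def)
  also have "\<dots> = Y (-q) (resid N (a - q)) (resid N a)"
    by (subst sum_triple_delta) (auto simp: resid_less[OF N])
  finally show ?thesis .
qed

lemma gset_eqI:
  assumes N: "0 < N" and X: "X \<in> gset N" and Y: "Y \<in> gset N"
    and pair: "\<And>q a. lpair N X (elem N q a) = lpair N Y (elem N q a)"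
  shows "X = Y"
proof (intro ext)
  fix p j k
  show "X p j k = Y p j k"
  proof (cases "X p j k = 0 \<and> Y p j k = 0")
    case False
    then have "j < N" "k < N" "k = resid N (int j - p)"
      using gset_nonzero_entry[OF X] gset_nonzero_entry[OF Y] by blast+
    then have "resid N (int k + p) = j" "resid N (int k) = k"
      using N by (simp_all add: resid_def nat_mod_as_int mod_simps)
    then show ?thesis
      using pair[of "-p" "int k"] lpair_elem_right[OF N gset_finite_lsupp[OF X]]
        lpair_elem_right[OF N gset_finite_lsupp[OF Y]] by simp
  qed simp
qed

lemma grad_eqI:
  assumes N: "0 < N" and G: "has_grad N \<phi> L G"
  shows "grad N \<phi> L = G"
  unfolding grad_def
proof (rule the_equality[where P = "has_grad N \<phi> L", OF G])
  fix G' assume G': "has_grad N \<phi> L G'"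
  show "G' = G"
  proof (rule gset_eqI[OF N])
    show "G' \<in> gset N" "G \<in> gset N"
      using G G' unfolding has_grad_def by auto
    show "lpair N G' (elem N q a) = lpair N G (elem N q a)" for q a
      using G G' elem_in_gset[OF N] unfolding has_grad_def by (meson DERIV_unique)
  qed
qed

lemma has_grad_coord:
  assumes N: "0 < N" and i: "0 \<le> i" "i \<le> int m"
  shows "has_grad N (coord N m i k) L (elem N i (k + i))"
  unfolding has_grad_def
proof (intro conjI ballI)
  show "elem N i (k + i) \<in> gset N" by (rule elem_in_gset[OF N])
  fix M
  have "coord N m i k (ladd L (lsmul e M)) = coord N m i k L + e * coord N m i k M" for e
    unfolding coord_def ladd_def lsmul_def by simp
  moreover have "lpair N (elem N i (k + i)) M = coord N m i k M"
    using i by (simp add: lpair_elem_left[OF N] coord_def resid_def)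
  moreover have "((\<lambda>e. coord N m i k L + e * coord N m i k M)
      has_field_derivative coord N m i k M) (at 0)"
    by (auto intro!: derivative_eq_intros)
  ultimately show "((\<lambda>e. coord N m i k (ladd L (lsmul e M)))
      has_field_derivative lpair N (elem N i (k + i)) M) (at 0)"
    by simp
qed

section \<open>The bracket on elementary loop matrices\<close>

definition pb2_form :: "nat \<Rightarrow> lmat \<Rightarrow> lmat \<Rightarrow> lmat \<Rightarrow> complex" where
  "pb2_form N L G H =
      1/2 * lpair N (A1op N (lmul N G L)) (lmul N H L)
    - 1/2 * lpair N (A2op N (lmul N L G)) (lmul N L H)
    + 1/2 * lpair N (Sop N (lmul N L G)) (lmul N H L)
    - 1/2 * lpair N (Sstar N (lmul N G L)) (lmul N L H)"

lemma PB2_eq_pb2_form: "PB2 N \<phi> \<psi> L = pb2_form N L (grad N \<phi> L) (grad N \<psi> L)"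
  unfolding PB2_def pb2_form_def dl_def dr_def by simp

lemma lmul_elem_left:
  assumes N: "0 < N"
  shows "lmul N (elem N p a) L r j k
    = (if j = resid N a then L (r - p) (resid N (a - p)) k else 0)"
proof -
  have "lmul N (elem N p a) L r j k = (\<Sum>q\<in>{p}. \<Sum>l<N. elem N p a q j l * L (r - q) l k)"
    by (rule lmul_eq_sum_over) (auto simp: lsupp_elem[OF N])
  also have "\<dots> = (\<Sum>l<N. if l = resid N (a - p)
      then (if j = resid N a then L (r - p) l k else 0) else 0)"
    by (simp add: elem_def)
  also have "\<dots> = (if j = resid N a then L (r - p) (resid N (a - p)) k else 0)"
    by (simp add: resid_less[OF N])
  finally show ?thesis .
qed

lemma lmul_elem_right:
  assumes N: "0 < N" and L: "finite (lsupp L)"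
  shows "lmul N L (elem N p a) r j k
    = (if k = resid N (a - p) then L (r - p) j (resid N a) else 0)"
proof -
  have "lmul N L (elem N p a) r j k
      = (\<Sum>q\<in>lsupp L \<union> {r - p}. \<Sum>l<N. L q j l * elem N p a (r - q) l k)"
    by (rule lmul_eq_sum_over) (use L in auto)
  also have "\<dots> = (\<Sum>q\<in>lsupp L \<union> {r - p}. if q = r - p then (\<Sum>l<N. if l = resid N a
      then (if k = resid N (a - p) then L q j l else 0) else 0) else 0)"
    by (intro sum.cong refl) (auto simp: elem_def)
  also have "\<dots> = (if k = resid N (a - p) then L (r - p) j (resid N a) else 0)"
    using L by (simp add: resid_less[OF N] sum.delta')
  finally show ?thesis .
qed

lemma R0_apply: "R0 X r j l = of_int (sgn r) * X r j l"
  unfolding R0_def Ppos_def Pneg_def by (simp add: sgn_if)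

lemma Wop_lmul_elem_left:
  assumes N: "0 < N"
  shows "Wop N (lmul N (elem N p a) L) r j l =
    (if r = 0 \<and> j = l \<and> j < N
     then of_int (sgn (int (resid N a) - int j)) * L (-p) (resid N (a - p)) (resid N a) else 0)"
proof -
  have "(\<Sum>i<N. of_int (sgn (int i - int j)) * P0 (lmul N (elem N p a) L) 0 i i)
      = (\<Sum>i<N. if i = resid N a
          then of_int (sgn (int i - int j)) * L (-p) (resid N (a - p)) i else 0)" for j
    by (intro sum.cong refl) (simp add: P0_def lmul_elem_left[OF N])
  then show ?thesis
    unfolding Wop_def by (simp add: resid_less[OF N])
qed

lemma Wop_lmul_elem_right:
  assumes N: "0 < N" and L: "finite (lsupp L)"
  shows "Wop N (lmul N L (elem N p a)) r j l =
    (if r = 0 \<and> j = l \<and> j < N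
     then of_int (sgn (int (resid N (a - p)) - int j)) * L (-p) (resid N (a - p)) (resid N a)
     else 0)"
proof -
  have "(\<Sum>i<N. of_int (sgn (int i - int j)) * P0 (lmul N L (elem N p a)) 0 i i)
      = (\<Sum>i<N. if i = resid N (a - p)
          then of_int (sgn (int i - int j)) * L (-p) i (resid N a) else 0)" for j
    by (intro sum.cong refl) (simp add: P0_def lmul_elem_right[OF N L])
  then show ?thesis
    unfolding Wop_def by (simp add: resid_less[OF N])
qed

lemma lpair_A1_elem:
  assumes N: "0 < N" and Q: "finite Q" "0 \<in> Q" "\<And>r. r - p \<in> lsupp L \<Longrightarrow> r \<in> Q"
  shows "lpair N (A1op N (lmul N (elem N p a) L)) (lmul N (elem N q c) L) =
    (\<Sum>r\<in>Q. of_int (sgn r) * L (r - p) (resid N (a - p)) (resid N c)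
                         * L (- r - q) (resid N (c - q)) (resid N a))
    + of_int (sgn (int (resid N a) - int (resid N c)))
        * L (-p) (resid N (a - p)) (resid N a) * L (-q) (resid N (c - q)) (resid N c)"
  (is "_ = ?rhs")
proof -
  have "lsupp (A1op N (lmul N (elem N p a) L)) \<subseteq> Q"
  proof
    fix r assume "r \<in> lsupp (A1op N (lmul N (elem N p a) L))"
    then obtain j l where "A1op N (lmul N (elem N p a) L) r j l \<noteq> 0"
      unfolding lsupp_def by auto
    then have "r = 0 \<or> L (r - p) (resid N (a - p)) l \<noteq> 0"
      by (auto simp: A1op_def R0_apply lmul_elem_left[OF N] Wop_lmul_elem_left[OF N]
          split: if_splits)
    then show "r \<in> Q" using Q unfolding lsupp_def by auto
  qed
  then have "lpair N (A1op N (lmul N (elem N p a) L)) (lmul N (elem N q c) L) =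
     (\<Sum>j<N. \<Sum>r\<in>Q. \<Sum>l<N. A1op N (lmul N (elem N p a) L) r j l * lmul N (elem N q c) L (- r) l j)"
    by (rule lpair_eq_sum_over[OF Q(1)])
  also have "\<dots> = (\<Sum>j<N. \<Sum>r\<in>Q. \<Sum>l<N.
       (if j = resid N a \<and> l = resid N c
        then of_int (sgn r) * L (r - p) (resid N (a - p)) (resid N c)
               * L (- r - q) (resid N (c - q)) (resid N a) else 0)
     + (if (r = 0 \<and> j = resid N c) \<and> l = resid N c
        then of_int (sgn (int (resid N a) - int (resid N c)))
               * L (-p) (resid N (a - p)) (resid N a) * L (-q) (resid N (c - q)) (resid N c)
        else 0))"
    by (intro sum.cong refl)
      (auto simp: A1op_def R0_apply lmul_elem_left[OF N] Wop_lmul_elem_left[OF N] resid_less[OF N])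
  also have "\<dots> = ?rhs"
    using Q by (simp add: sum.distrib resid_less[OF N])
  finally show ?thesis .
qed

lemma lpair_A2_elem:
  assumes N: "0 < N" and L: "finite (lsupp L)"
    and Q: "finite Q" "0 \<in> Q" "\<And>r. r - p \<in> lsupp L \<Longrightarrow> r \<in> Q"
  shows "lpair N (A2op N (lmul N L (elem N p a))) (lmul N L (elem N q c)) =
    (\<Sum>r\<in>Q. of_int (sgn r) * L (r - p) (resid N (c - q)) (resid N a)
                         * L (- r - q) (resid N (a - p)) (resid N c))
    - of_int (sgn (int (resid N (a - p)) - int (resid N (c - q))))
        * L (-p) (resid N (a - p)) (resid N a) * L (-q) (resid N (c - q)) (resid N c)"
  (is "_ = ?rhs")
proof -
  have "lsupp (A2op N (lmul N L (elem N p a))) \<subseteq> Q"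
  proof
    fix r assume "r \<in> lsupp (A2op N (lmul N L (elem N p a)))"
    then obtain j l where "A2op N (lmul N L (elem N p a)) r j l \<noteq> 0"
      unfolding lsupp_def by auto
    then have "r = 0 \<or> L (r - p) j (resid N a) \<noteq> 0"
      by (auto simp: A2op_def R0_apply lmul_elem_right[OF N L] Wop_lmul_elem_right[OF N L]
          split: if_splits)
    then show "r \<in> Q" using Q unfolding lsupp_def by auto
  qed
  then have "lpair N (A2op N (lmul N L (elem N p a))) (lmul N L (elem N q c)) =
     (\<Sum>j<N. \<Sum>r\<in>Q. \<Sum>l<N. A2op N (lmul N L (elem N p a)) r j l * lmul N L (elem N q c) (- r) l j)"
    by (rule lpair_eq_sum_over[OF Q(1)])
  also have "\<dots> = (\<Sum>j<N. \<Sum>r\<in>Q. \<Sum>l<N.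
       (if j = resid N (c - q) \<and> l = resid N (a - p)
        then of_int (sgn r) * L (r - p) (resid N (c - q)) (resid N a)
               * L (- r - q) (resid N (a - p)) (resid N c) else 0)
     - (if r = 0 \<and> j = resid N (c - q) \<and> l = resid N (c - q)
        then of_int (sgn (int (resid N (a - p)) - int (resid N (c - q))))
               * L (-p) (resid N (a - p)) (resid N a) * L (-q) (resid N (c - q)) (resid N c)
        else 0))"
    by (intro sum.cong refl)
      (auto simp: A2op_def R0_apply lmul_elem_right[OF N L] Wop_lmul_elem_right[OF N L]
        resid_less[OF N])
  also have "\<dots> = ?rhs"
    using Q by (simp add: sum_subtractf resid_less[OF N])
  finally show ?thesis .
qed

lemma lpair_S_elem:
  assumes N: "0 < N" and L: "finite (lsupp L)"
  shows "lpair N (Sop N (lmul N L (elem N p a))) (lmul N (elem N q c) L) =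
    (if resid N c = resid N (a - p)
     then (\<Sum>j<N. L (-p) j (resid N a) * L (-q) (resid N (c - q)) j) else 0)
    - of_int (sgn (int (resid N (a - p)) - int (resid N c)))
        * L (-p) (resid N (a - p)) (resid N a) * L (-q) (resid N (c - q)) (resid N c)"
  (is "_ = ?rhs")
proof -
  have "lsupp (Sop N (lmul N L (elem N p a))) \<subseteq> {0}"
    unfolding lsupp_def Sop_def P0_def Wop_def by auto
  then have "lpair N (Sop N (lmul N L (elem N p a))) (lmul N (elem N q c) L) =
     (\<Sum>j<N. \<Sum>r\<in>{0}. \<Sum>l<N. Sop N (lmul N L (elem N p a)) r j l * lmul N (elem N q c) L (- r) l j)"
    by (intro lpair_eq_sum_over) auto
  also have "\<dots> = (\<Sum>j<N. \<Sum>r\<in>{0::int}. \<Sum>l<N.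
       (if l = resid N c \<and> resid N c = resid N (a - p)
        then L (-p) j (resid N a) * L (-q) (resid N (c - q)) j else 0)
     - (if j = resid N c \<and> l = resid N c
        then of_int (sgn (int (resid N (a - p)) - int (resid N c)))
               * L (-p) (resid N (a - p)) (resid N a) * L (-q) (resid N (c - q)) (resid N c)
        else 0))"
    by (intro sum.cong refl)
      (auto simp: Sop_def P0_def lmul_elem_right[OF N L] lmul_elem_left[OF N]
        Wop_lmul_elem_right[OF N L] resid_less[OF N])
  also have "\<dots> = ?rhs"
    by (simp add: sum_subtractf resid_less[OF N])
  finally show ?thesis .
qed

lemma lpair_Sstar_elem:
  assumes N: "0 < N" and L: "finite (lsupp L)"
  shows "lpair N (Sstar N (lmul N (elem N p a) L)) (lmul N L (elem N q c)) =
    (if resid N a = resid N (c - q)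
     then (\<Sum>l<N. L (-p) (resid N (a - p)) l * L (-q) l (resid N c)) else 0)
    + of_int (sgn (int (resid N a) - int (resid N (c - q))))
        * L (-p) (resid N (a - p)) (resid N a) * L (-q) (resid N (c - q)) (resid N c)"
  (is "_ = ?rhs")
proof -
  have "lsupp (Sstar N (lmul N (elem N p a) L)) \<subseteq> {0}"
    unfolding lsupp_def Sstar_def P0_def Wop_def by auto
  then have "lpair N (Sstar N (lmul N (elem N p a) L)) (lmul N L (elem N q c)) =
     (\<Sum>j<N. \<Sum>r\<in>{0}. \<Sum>l<N. Sstar N (lmul N (elem N p a) L) r j l * lmul N L (elem N q c) (- r) l j)"
    by (intro lpair_eq_sum_over) auto
  also have "\<dots> = (\<Sum>j<N. \<Sum>r\<in>{0::int}. \<Sum>l<N.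
       (if j = resid N a \<and> resid N a = resid N (c - q)
        then L (-p) (resid N (a - p)) l * L (-q) l (resid N c) else 0)
     + (if j = resid N (c - q) \<and> l = resid N (c - q)
        then of_int (sgn (int (resid N a) - int (resid N (c - q))))
               * L (-p) (resid N (a - p)) (resid N a) * L (-q) (resid N (c - q)) (resid N c)
        else 0))"
    by (intro sum.cong refl)
      (auto simp: Sstar_def P0_def lmul_elem_right[OF N L] lmul_elem_left[OF N]
        Wop_lmul_elem_left[OF N] resid_less[OF N])
  also have "\<dots> = ?rhs"
    by (simp add: sum.distrib resid_less[OF N])
  finally show ?thesis .
qed

section \<open>The bracket at a point of T_{m+1}\<close>

text \<open>tcoef m b a s u is the entry of Tmat N m b a at lambda^(-s) in row u; s = -1 is the
  entry 1 of calE.\<close>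

definition tcoef :: "nat \<Rightarrow> (nat \<Rightarrow> complex) \<Rightarrow> (nat \<Rightarrow> nat \<Rightarrow> complex) \<Rightarrow> int \<Rightarrow> nat \<Rightarrow> complex" where
  "tcoef m b a s u =
     (if s = -1 then 1 else if s = 0 then b u else if 1 \<le> s \<and> s \<le> int m then a (nat s) u else 0)"

lemma tcoef_nonzero: "tcoef m b a s u \<noteq> 0 \<Longrightarrow> -1 \<le> s \<and> s \<le> int m"
  unfolding tcoef_def by (auto split: if_splits)

lemma tcoef_minus_one [simp]: "tcoef m b a (-1) u = 1"
  unfolding tcoef_def by simp

lemma Tmat_apply:
  assumes N: "0 < N"
  shows "Tmat N m b a d j k
    = (if j < N \<and> k < N \<and> int k = (int j - d) mod int N then tcoef m b a (-d) j else 0)"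
proof (cases "j < N \<and> k < N")
  case True
  have "int j = (int k + 1) mod int N \<longleftrightarrow> int N dvd (int j - (int k + 1))"
    using True by (simp flip: mod_eq_dvd_iff)
  also have "\<dots> \<longleftrightarrow> int N dvd (int k - (int j - 1))"
    by (metis dvd_minus_iff minus_diff_eq diff_diff_eq2 diff_diff_eq add.commute)
  also have "\<dots> \<longleftrightarrow> int k = (int j - 1) mod int N"
    using True by (simp flip: mod_eq_dvd_iff)
  finally have "int j = (int k + 1) mod int N \<longleftrightarrow> int k = (int j - 1) mod int N" .
  moreover have "j = k \<longleftrightarrow> int k = (int j - 0) mod int N"
    using True by auto
  ultimately show ?thesis
    using True unfolding Tmat_def tcoef_def by (auto simp: algebra_simps)
qed (auto simp: Tmat_def)

lemma lsupp_Tmat: "0 < N \<Longrightarrow> lsupp (Tmat N m b a) \<subseteq> {- int m..1}"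
  unfolding lsupp_def by (auto simp: Tmat_apply tcoef_def split: if_splits)

lemma finite_lsupp_Tmat: "0 < N \<Longrightarrow> finite (lsupp (Tmat N m b a))"
  by (rule finite_subset[OF lsupp_Tmat]) auto

lemma Tmat_outside_degrees: "0 < N \<Longrightarrow> d \<notin> {- int m..1} \<Longrightarrow> Tmat N m b a d j k = 0"
  using lsupp_Tmat unfolding lsupp_def by blast

lemma Tmat_in_gset: "0 < N \<Longrightarrow> Tmat N m b a \<in> gset N"
  by (rule in_gsetI) (auto simp: finite_lsupp_Tmat Tmat_apply eq_resid_iff split: if_splits)

lemma Tmat_resid:
  assumes N: "0 < N"
  shows "Tmat N m b a d (resid N x) (resid N y)
    = (if int N dvd (y - (x - d)) then tcoef m b a (-d) (resid N x) else 0)"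
  using N by (simp add: Tmat_apply resid_less of_nat_resid mod_diff_left_eq flip: mod_eq_dvd_iff)

lemma Tmat_resid_left:
  assumes N: "0 < N" and t: "t < N"
  shows "Tmat N m b a d (resid N x) t
    = (if t = resid N (x - d) then tcoef m b a (-d) (resid N x) else 0)"
  using N t by (simp add: Tmat_apply resid_less of_nat_resid mod_diff_left_eq eq_resid_iff)

text \<open>At T, twice the bracket of elem N i (k + i) and elem N j (l + j) is pb2_conv, the
  contribution of R_0, plus a multiple of wcorr, the contribution of W and of the P_0 parts
  of S and S^*.\<close>

definition pb2_conv ::
    "nat \<Rightarrow> nat \<Rightarrow> (nat \<Rightarrow> complex) \<Rightarrow> (nat \<Rightarrow> nat \<Rightarrow> complex) \<Rightarrow> int \<Rightarrow> int \<Rightarrow> int \<Rightarrow> int \<Rightarrow> complex"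
  where
  "pb2_conv N m b a i k j l = (\<Sum>s\<in>{-1..int m}. if int N dvd (l + j - k - s)
      then (of_int (sgn (i - s)) + of_int (sgn (j - s)))
           * tcoef m b a s (resid N k) * tcoef m b a (i + j - s) (resid N l)
      else 0)"

definition wcorr :: "nat \<Rightarrow> int \<Rightarrow> int \<Rightarrow> int \<Rightarrow> int \<Rightarrow> int" where
  "wcorr N i k j l =
       sgn ((k + i) mod int N - (l + j) mod int N) + sgn (k mod int N - l mod int N)
     - sgn (k mod int N - (l + j) mod int N) - sgn ((k + i) mod int N - l mod int N)
     + (if (l + j - k) mod int N = 0 then 1 else 0) - (if (l - k - i) mod int N = 0 then 1 else 0)"

locale Tmat_point =
  fixes N m :: nat and b :: "nat \<Rightarrow> complex" and a :: "nat \<Rightarrow> nat \<Rightarrow> complex"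
  assumes N: "0 < N"
begin

abbreviation T :: lmat where "T \<equiv> Tmat N m b a"
abbreviation tc :: "int \<Rightarrow> int \<Rightarrow> complex" where "tc s u \<equiv> tcoef m b a s (resid N u)"

lemma Tmat_diagonal_entry: "T (-i) (resid N k) (resid N (k + i)) = tc i k"
  by (simp add: Tmat_resid[OF N])

lemma lpair_A1_elem_Tmat:
  "lpair N (A1op N (lmul N (elem N i (k + i)) T)) (lmul N (elem N j (l + j)) T) =
    (\<Sum>s\<in>{-1..int m}. if int N dvd (l + j - k - s)
       then of_int (sgn (i - s)) * tc s k * tc (i + j - s) l else 0)
    + of_int (sgn ((k + i) mod int N - (l + j) mod int N)) * tc i k * tc j l"
proof -
  let ?F = "\<lambda>r. of_int (sgn r) * T (r - i) (resid N k) (resid N (l + j))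
                               * T (- r - j) (resid N l) (resid N (k + i))"
  have "\<And>r. r - i \<in> lsupp T \<Longrightarrow> r \<in> {i - int m..i + 1} \<union> {0}"
    using lsupp_Tmat[OF N] by fastforce
  then have "lpair N (A1op N (lmul N (elem N i (k + i)) T)) (lmul N (elem N j (l + j)) T)
     = (\<Sum>r\<in>{i - int m..i + 1} \<union> {0}. ?F r)
       + of_int (sgn ((k + i) mod int N - (l + j) mod int N)) * tc i k * tc j l"
    using lpair_A1_elem[of N "{i - int m..i + 1} \<union> {0}" i T "k + i" j "l + j", OF N]
    by (simp add: Tmat_diagonal_entry of_nat_resid[OF N])
  also have "(\<Sum>r\<in>{i - int m..i + 1} \<union> {0}. ?F r) = (\<Sum>r\<in>{i - int m..i + 1}. ?F r)"
    by (rule sum.mono_neutral_right) auto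
  also have "\<dots> = (\<Sum>s\<in>{-1..int m}. ?F (i - s))"
    by (rule sum.reindex_bij_witness[of _ "\<lambda>s. i - s" "\<lambda>r. i - r"]) auto
  also have "\<dots> = (\<Sum>s\<in>{-1..int m}. if int N dvd (l + j - k - s)
       then of_int (sgn (i - s)) * tc s k * tc (i + j - s) l else 0)"
  proof (intro sum.cong refl)
    fix s
    have "int N dvd (k + i - (l - (- (i - s) - j))) \<longleftrightarrow> int N dvd (l + j - k - s)"
      by (subst dvd_diff_commute) (simp add: algebra_simps)
    then show "?F (i - s) = (if int N dvd (l + j - k - s)
       then of_int (sgn (i - s)) * tc s k * tc (i + j - s) l else 0)"
      by (simp add: Tmat_resid[OF N] algebra_simps)
  qed
  finally show ?thesis .
qed

lemma lpair_A2_elem_Tmat: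
  "lpair N (A2op N (lmul N T (elem N i (k + i)))) (lmul N T (elem N j (l + j))) =
    (\<Sum>s\<in>{-1..int m}. if int N dvd (l + j - k - s)
       then of_int (sgn (s - j)) * tc s k * tc (i + j - s) l else 0)
    - of_int (sgn (k mod int N - l mod int N)) * tc i k * tc j l"
proof -
  let ?Q = "{-1 - j..int m - j} \<union> {i - int m..i + 1} \<union> {0}"
  let ?F = "\<lambda>r. of_int (sgn r) * T (r - i) (resid N l) (resid N (k + i))
                               * T (- r - j) (resid N k) (resid N (l + j))"
  have "\<And>r. r - i \<in> lsupp T \<Longrightarrow> r \<in> ?Q"
    using lsupp_Tmat[OF N] by fastforce
  then have "lpair N (A2op N (lmul N T (elem N i (k + i)))) (lmul N T (elem N j (l + j)))
     = (\<Sum>r\<in>?Q. ?F r) - of_int (sgn (k mod int N - l mod int N)) * tc i k * tc j l"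
    using lpair_A2_elem[of N T ?Q i "k + i" j "l + j", OF N finite_lsupp_Tmat[OF N]]
    by (simp add: Tmat_diagonal_entry of_nat_resid[OF N])
  also have "(\<Sum>r\<in>?Q. ?F r) = (\<Sum>r\<in>{-1 - j..int m - j}. ?F r)"
    by (rule sum.mono_neutral_right) (auto simp: Tmat_outside_degrees[OF N])
  also have "\<dots> = (\<Sum>s\<in>{-1..int m}. ?F (s - j))"
    by (rule sum.reindex_bij_witness[of _ "\<lambda>s. s - j" "\<lambda>r. r + j"]) auto
  also have "\<dots> = (\<Sum>s\<in>{-1..int m}. if int N dvd (l + j - k - s)
       then of_int (sgn (s - j)) * tc s k * tc (i + j - s) l else 0)"
  proof (intro sum.cong refl)
    fix s
    have "int N dvd (k + i - (l - (s - j - i))) \<longleftrightarrow> int N dvd (l + j - k - s)"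
      by (subst dvd_diff_commute) (simp add: algebra_simps)
    then show "?F (s - j) = (if int N dvd (l + j - k - s)
       then of_int (sgn (s - j)) * tc s k * tc (i + j - s) l else 0)"
      by (simp add: Tmat_resid[OF N] algebra_simps)
  qed
  finally show ?thesis .
qed

lemma lpair_S_elem_Tmat:
  "lpair N (Sop N (lmul N T (elem N i (k + i)))) (lmul N (elem N j (l + j)) T) =
    (if int N dvd (l + j - k) then tc i k * tc j l else 0)
    - of_int (sgn (k mod int N - (l + j) mod int N)) * tc i k * tc j l"
proof -
  have "lpair N (Sop N (lmul N T (elem N i (k + i)))) (lmul N (elem N j (l + j)) T)
    = (if resid N (l + j) = resid N k
       then (\<Sum>t<N. T (-i) t (resid N (k + i)) * T (-j) (resid N l) t) else 0)
      - of_int (sgn (k mod int N - (l + j) mod int N)) * tc i k * tc j l"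
    using lpair_S_elem[of N T i "k + i" j "l + j", OF N finite_lsupp_Tmat[OF N]]
    by (simp add: Tmat_diagonal_entry of_nat_resid[OF N])
  also have "(if resid N (l + j) = resid N k
      then (\<Sum>t<N. T (-i) t (resid N (k + i)) * T (-j) (resid N l) t) else 0)
      = (if int N dvd (l + j - k) then tc i k * tc j l else 0)"
  proof (cases "resid N (l + j) = resid N k")
    case True
    have "(\<Sum>t<N. T (-i) t (resid N (k + i)) * T (-j) (resid N l) t)
        = (\<Sum>t<N. if t = resid N k then tc i k * tc j l else 0)"
      using True by (intro sum.cong refl) (auto simp: Tmat_resid_left[OF N] Tmat_diagonal_entry)
    then show ?thesis
      using True by (simp add: resid_less[OF N] resid_eq_iff[OF N] mod_eq_dvd_iff)
  qed (simp add: resid_eq_iff[OF N] mod_eq_dvd_iff)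
  finally show ?thesis .
qed

lemma lpair_Sstar_elem_Tmat:
  "lpair N (Sstar N (lmul N (elem N i (k + i)) T)) (lmul N T (elem N j (l + j))) =
    (if int N dvd (l - k - i) then tc i k * tc j l else 0)
    + of_int (sgn ((k + i) mod int N - l mod int N)) * tc i k * tc j l"
proof -
  have "lpair N (Sstar N (lmul N (elem N i (k + i)) T)) (lmul N T (elem N j (l + j)))
    = (if resid N (k + i) = resid N l
       then (\<Sum>t<N. T (-i) (resid N k) t * T (-j) t (resid N (l + j))) else 0)
      + of_int (sgn ((k + i) mod int N - l mod int N)) * tc i k * tc j l"
    using lpair_Sstar_elem[of N T i "k + i" j "l + j", OF N finite_lsupp_Tmat[OF N]]
    by (simp add: Tmat_diagonal_entry of_nat_resid[OF N])
  also have "(if resid N (k + i) = resid N l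
      then (\<Sum>t<N. T (-i) (resid N k) t * T (-j) t (resid N (l + j))) else 0)
      = (if int N dvd (l - k - i) then tc i k * tc j l else 0)"
  proof (cases "resid N (k + i) = resid N l")
    case True
    have "(\<Sum>t<N. T (-i) (resid N k) t * T (-j) t (resid N (l + j)))
        = (\<Sum>t<N. if t = resid N (k + i) then tc i k * tc j l else 0)"
      using True by (intro sum.cong refl) (auto simp: Tmat_resid_left[OF N] Tmat_diagonal_entry)
    moreover have "int N dvd (l - k - i) \<longleftrightarrow> int N dvd (k + i - l)"
      by (subst dvd_diff_commute) (simp add: algebra_simps)
    ultimately show ?thesis
      using True by (simp add: resid_less[OF N] resid_eq_iff[OF N] mod_eq_dvd_iff)
  next
    case False
    moreover have "int N dvd (l - k - i) \<longleftrightarrow> int N dvd (k + i - l)"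
      by (subst dvd_diff_commute) (simp add: algebra_simps)
    ultimately show ?thesis
      by (simp add: resid_eq_iff[OF N] mod_eq_dvd_iff)
  qed
  finally show ?thesis .
qed

lemma pb2_form_Tmat_elem:
  "2 * pb2_form N T (elem N i (k + i)) (elem N j (l + j))
     = pb2_conv N m b a i k j l + tc i k * tc j l * of_int (wcorr N i k j l)"
proof -
  have conv: "pb2_conv N m b a i k j l
      = (\<Sum>s\<in>{-1..int m}. if int N dvd (l + j - k - s)
          then of_int (sgn (i - s)) * tc s k * tc (i + j - s) l else 0)
      - (\<Sum>s\<in>{-1..int m}. if int N dvd (l + j - k - s)
          then of_int (sgn (s - j)) * tc s k * tc (i + j - s) l else 0)"
    unfolding pb2_conv_def sum_subtractf[symmetric]
    by (intro sum.cong refl) (simp add: sgn_if algebra_simps)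
  have "2 * pb2_form N T (elem N i (k + i)) (elem N j (l + j)) =
       lpair N (A1op N (lmul N (elem N i (k + i)) T)) (lmul N (elem N j (l + j)) T)
     - lpair N (A2op N (lmul N T (elem N i (k + i)))) (lmul N T (elem N j (l + j)))
     + lpair N (Sop N (lmul N T (elem N i (k + i)))) (lmul N (elem N j (l + j)) T)
     - lpair N (Sstar N (lmul N (elem N i (k + i)) T)) (lmul N T (elem N j (l + j)))"
    unfolding pb2_form_def by (simp add: algebra_simps)
  also have "\<dots> = pb2_conv N m b a i k j l + tc i k * tc j l * of_int (wcorr N i k j l)"
    unfolding lpair_A1_elem_Tmat lpair_A2_elem_Tmat lpair_S_elem_Tmat lpair_Sstar_elem_Tmat
      conv wcorr_def
    by (simp add: algebra_simps dvd_eq_mod_eq_0)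
  finally show ?thesis .
qed

end

lemma mod_add_bounded:
  fixes x t n :: int
  assumes "0 \<le> x" "x < n" "- n \<le> t" "t \<le> n"
  shows "(x + t) mod n = (if x + t < 0 then x + t + n else if x + t < n then x + t else x + t - n)"
proof -
  consider "x + t < 0" | "0 \<le> x + t" "x + t < n" | "n \<le> x + t" by linarith
  then show ?thesis
  proof cases
    case 1
    then have "(x + t + n) mod n = x + t + n" using assms by (intro mod_pos_pos_trivial) auto
    then show ?thesis using 1 by simp
  next
    case 3
    then have "(x + t - n) mod n = x + t - n" using assms by (intro mod_pos_pos_trivial) auto
    then show ?thesis using 3 assms by (simp add: mod_diff_right_eq[symmetric])
  qed simp
qed

lemma mod_eq_0_small_iff:
  fixes x n :: int
  assumes "0 < n" "- 2 * n < x" "x < 2 * n"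
  shows "x mod n = 0 \<longleftrightarrow> x = 0 \<or> x = n \<or> x = - n"
proof
  assume "x mod n = 0"
  then obtain q where q: "x = n * q" by auto
  with assms have "-2 < q" "q < 2"
    by (metis mult.commute mult_less_cancel_right_pos mult_minus_left mult_2_right
        mult.right_neutral one_add_one mult_numeral_1_right)+
  then have "q = 0 \<or> q = 1 \<or> q = -1" by auto
  then show "x = 0 \<or> x = n \<or> x = - n" using q by auto
qed auto

lemma mod_diff_add_residues:
  fixes u v c n :: int
  shows "(u - v + c) mod n = (u mod n - v mod n + c) mod n"
proof -
  have "(u mod n - v mod n + c) mod n = ((u mod n - v mod n) mod n + c) mod n"
    by (simp add: mod_add_left_eq)
  also have "\<dots> = (u - v + c) mod n"
    by (simp add: mod_diff_eq mod_add_left_eq)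
  finally show ?thesis ..
qed

definition wcorr_closed :: "nat \<Rightarrow> int \<Rightarrow> int \<Rightarrow> int \<Rightarrow> int" where
  "wcorr_closed N i j d = (if d = 0 then sgn (i - j) else 0)
     - (if 1 \<le> d \<and> d \<le> i then 1 + sgn (d + j - i) else 0)
     + (if 1 \<le> int N - d \<and> int N - d \<le> j then 1 + sgn (int N - d + i - j) else 0)"

lemma wcorr_eq_closed:
  assumes i: "0 \<le> i" "i \<le> int m" and j: "0 \<le> j" "j \<le> int m" and N: "2 * m + 2 \<le> N"
  shows "wcorr N i k j l = wcorr_closed N i j ((l - k) mod int N)"
proof -
  \<comment> \<open>all residues in wcorr are x = k mod N or y = l mod N shifted by at most m, so every
    sign and congruence becomes a linear condition on x and y\<close>
  define n where "n = int N"
  have n: "2 * int m + 2 \<le> n" using N unfolding n_def by simp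
  define x where "x = k mod n"
  define y where "y = l mod n"
  have x: "0 \<le> x" "x < n" and y: "0 \<le> y" "y < n" using n unfolding x_def y_def by auto
  have "(k + i) mod n = (x + i) mod n" "(l + j) mod n = (y + j) mod n"
    "(l - k) mod n = (y - x) mod n"
    unfolding x_def y_def by (simp_all add: mod_simps)
  moreover have "(l + j - k) mod n = (y + j - x) mod n" "(l - k - i) mod n = (y - x - i) mod n"
    using mod_diff_add_residues[of l k j n] mod_diff_add_residues[of l k "- i" n]
    unfolding x_def y_def by (simp_all add: algebra_simps)
  moreover have "(x + i) mod n = (if x + i < n then x + i else x + i - n)"
    "(y + j) mod n = (if y + j < n then y + j else y + j - n)"
    "(y - x) mod n = (if 0 \<le> y - x then y - x else y - x + n)"
    using mod_add_bounded[OF x, of i] mod_add_bounded[OF y, of j] mod_add_bounded[OF y, of "- x"]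
      x y i j n by auto
  moreover have "(y + j - x) mod n = 0 \<longleftrightarrow> y + j - x = 0 \<or> y + j - x = n \<or> y + j - x = - n"
    "(y - x - i) mod n = 0 \<longleftrightarrow> y - x - i = 0 \<or> y - x - i = n \<or> y - x - i = - n"
    using mod_eq_0_small_iff[of n "y + j - x"] mod_eq_0_small_iff[of n "y - x - i"] x y i j n
    by auto
  ultimately show ?thesis
    unfolding wcorr_def wcorr_closed_def n_def[symmetric] x_def[symmetric] y_def[symmetric]
    using x y i j n by (simp add: sgn_if)
qed

lemma wcorr_minus_one:
  assumes i: "-1 \<le> i" "i \<le> int m" and N: "m + 2 \<le> N"
  shows "wcorr N i k (-1) l
    = (if (l - k - i - 1) mod int N = 0 then 1 else 0) - (if (l - k) mod int N = 0 then 1 else 0)"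
proof -
  define n where "n = int N"
  have n: "int m + 2 \<le> n" using N unfolding n_def by simp
  define x where "x = k mod n"
  define y where "y = l mod n"
  have x: "0 \<le> x" "x < n" and y: "0 \<le> y" "y < n" using n unfolding x_def y_def by auto
  have "(k + i) mod n = (x + i) mod n" "(l + -1) mod n = (y - 1) mod n"
    "(l - k) mod n = (y - x) mod n"
    unfolding x_def y_def by (simp_all add: mod_simps)
  moreover have "(l + -1 - k) mod n = (y - 1 - x) mod n" "(l - k - i) mod n = (y - x - i) mod n"
    "(l - k - i - 1) mod n = (y - x - (i + 1)) mod n"
    using mod_diff_add_residues[of l k "- 1" n] mod_diff_add_residues[of l k "- i" n]
      mod_diff_add_residues[of l k "- i - 1" n]
    unfolding x_def y_def by (simp_all add: algebra_simps)
  moreover have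
    "(x + i) mod n = (if x + i < 0 then x + i + n else if x + i < n then x + i else x + i - n)"
    "(y - 1) mod n = (if y - 1 < 0 then y - 1 + n else y - 1)"
    using mod_add_bounded[OF x, of i] mod_add_bounded[OF y, of "-1"] x y i n by auto
  moreover have "(y - 1 - x) mod n = 0 \<longleftrightarrow> y - 1 - x = 0 \<or> y - 1 - x = n \<or> y - 1 - x = - n"
    "(y - x - i) mod n = 0 \<longleftrightarrow> y - x - i = 0 \<or> y - x - i = n \<or> y - x - i = - n"
    "(y - x - (i + 1)) mod n = 0
      \<longleftrightarrow> y - x - (i + 1) = 0 \<or> y - x - (i + 1) = n \<or> y - x - (i + 1) = - n"
    "(y - x) mod n = 0 \<longleftrightarrow> y - x = 0"
    using mod_eq_0_small_iff[of n "y - 1 - x"] mod_eq_0_small_iff[of n "y - x - i"]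
      mod_eq_0_small_iff[of n "y - x - (i + 1)"] mod_eq_0_small_iff[of n "y - x"] x y i n
    by auto
  ultimately show ?thesis
    unfolding wcorr_def n_def[symmetric] x_def[symmetric] y_def[symmetric]
    using x y i n by (simp add: sgn_if)
qed

section \<open>Tangency of Hamiltonian vector fields\<close>

lemma pb2_conv_eq_0I:
  assumes "\<And>s. -1 \<le> s \<Longrightarrow> s \<le> int m \<Longrightarrow> int N dvd (l + j - k - s)
     \<Longrightarrow> tcoef m b a (i + j - s) (resid N l) \<noteq> 0 \<Longrightarrow> sgn (i - s) + sgn (j - s) = 0"
  shows "pb2_conv N m b a i k j l = 0"
  unfolding pb2_conv_def
proof (intro sum.neutral ballI)
  fix s assume "s \<in> {-1..int m}"
  then have "\<not> int N dvd (l + j - k - s) \<or> tcoef m b a (i + j - s) (resid N l) = 0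
      \<or> sgn (i - s) + sgn (j - s) = 0"
    using assms by auto
  then show "(if int N dvd (l + j - k - s)
      then (of_int (sgn (i - s)) + of_int (sgn (j - s)))
           * tcoef m b a s (resid N k) * tcoef m b a (i + j - s) (resid N l)
      else 0) = 0"
    by (metis (no_types) mult_eq_0_iff of_int_add of_int_0)
qed

lemma pb2_conv_outside:
  assumes "j \<notin> {-1..int m}"
  shows "pb2_conv N m b a i k j l = 0"
proof (rule pb2_conv_eq_0I)
  fix s assume "-1 \<le> s" "s \<le> int m" "int N dvd (l + j - k - s)"
    "tcoef m b a (i + j - s) (resid N l) \<noteq> 0"
  moreover from this have "-1 \<le> i + j - s" "i + j - s \<le> int m"
    using tcoef_nonzero by blast+
  ultimately show "sgn (i - s) + sgn (j - s) = 0"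
    using assms by (auto simp: sgn_if)
qed

lemma pb2_conv_minus_one_outside:
  assumes "i \<notin> {0..int m}"
  shows "pb2_conv N m b a i k (-1) l = 0"
proof (rule pb2_conv_eq_0I)
  fix s assume "-1 \<le> s" "s \<le> int m" "int N dvd (l + -1 - k - s)"
    "tcoef m b a (i + -1 - s) (resid N l) \<noteq> 0"
  moreover from this have "-1 \<le> i + -1 - s" "i + -1 - s \<le> int m"
    using tcoef_nonzero by blast+
  ultimately show "sgn (i - s) + sgn (-1 - s) = 0"
    using assms by (auto simp: sgn_if)
qed

context Tmat_point
begin

lemma pb2_conv_minus_one:
  assumes i: "0 \<le> i" "i \<le> int m"
  shows "pb2_conv N m b a i k (-1) l
    = (if int N dvd (l - k) then tc i l else 0) - (if int N dvd (l - k - i - 1) then tc i k else 0)"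
proof -
  let ?g = "\<lambda>s. if int N dvd (l + -1 - k - s)
    then (of_int (sgn (i - s)) + of_int (sgn (-1 - s))) * tc s k * tc (i + -1 - s) l else 0"
  have "pb2_conv N m b a i k (-1) l = sum ?g {-1..int m}"
    unfolding pb2_conv_def ..
  also have "\<dots> = sum ?g {-1, i}"
  proof (rule sum.mono_neutral_right)
    show "\<forall>s\<in>{-1..int m} - {-1, i}. ?g s = 0"
    proof
      fix s assume s: "s \<in> {-1..int m} - {-1, i}"
      show "?g s = 0"
      proof (cases "s < i")
        case False
        then have "tc (i + -1 - s) l = 0" using s tcoef_nonzero by fastforce
        then show ?thesis by simp
      qed (use s in \<open>auto simp: sgn_if\<close>)
    qed
  qed (use i in auto)
  also have "\<dots> = ?g (-1) + ?g i"
    using i by simp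
  also have "\<dots> = (if int N dvd (l - k) then tc i l else 0)
      - (if int N dvd (l - k - i - 1) then tc i k else 0)"
    using i by (simp add: sgn_if algebra_simps)
  finally show ?thesis .
qed

end

locale Tmat_point_wide = Tmat_point +
  assumes Nm: "m + 2 \<le> N"
begin

lemma pb2_form_Tmat_elem_outside:
  assumes j: "j \<notin> {0..int m}"
  shows "pb2_form N T (elem N i (k + i)) (elem N j (l + j)) = 0"
proof -
  have "pb2_conv N m b a i k j l + tc i k * tc j l * of_int (wcorr N i k j l) = 0"
  proof (cases "j = -1")
    case False
    then have "j \<notin> {-1..int m}" using j by auto
    then show ?thesis
      using pb2_conv_outside tcoef_nonzero by fastforce
  next
    case j_minus_one: True
    \<comment> \<open>the two surviving convolution terms cancel against the W-correction\<close>
    show ?thesis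
    proof (cases "0 \<le> i \<and> i \<le> int m")
      case True
      have "int N dvd (l - k) \<Longrightarrow> resid N l = resid N k"
        by (simp add: resid_eq_iff[OF N] mod_eq_dvd_iff)
      moreover have "wcorr N i k j l = (if int N dvd (l - k - i - 1) then 1 else 0)
          - (if int N dvd (l - k) then 1 else 0)"
        using wcorr_minus_one[of i m N k l] True Nm j_minus_one by (simp add: dvd_eq_mod_eq_0)
      ultimately show ?thesis
        using pb2_conv_minus_one[of i k l] True j_minus_one by auto
    next
      case False
      then have "pb2_conv N m b a i k j l = 0"
        using pb2_conv_minus_one_outside j_minus_one by simp
      moreover have "tc i k * of_int (wcorr N i k j l) = 0"
      proof (cases "i = -1")
        case True
        then show ?thesis using wcorr_minus_one[of i m N k l] Nm j_minus_one by simp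
      qed (use False tcoef_nonzero in fastforce)
      ultimately show ?thesis by auto
    qed
  qed
  then show ?thesis
    using pb2_form_Tmat_elem[of i k j l] by simp
qed

end

section \<open>Linearity of the bracket in the gradients\<close>

definition lmat_linear :: "(lmat \<Rightarrow> complex) \<Rightarrow> bool" where
  "lmat_linear f \<longleftrightarrow>
     (\<forall>X Y. finite (lsupp X) \<longrightarrow> finite (lsupp Y) \<longrightarrow> f (ladd X Y) = f X + f Y)
   \<and> (\<forall>c X. finite (lsupp X) \<longrightarrow> f (lsmul c X) = c * f X)"

definition lmat_sum :: "'x set \<Rightarrow> ('x \<Rightarrow> lmat) \<Rightarrow> lmat" where
  "lmat_sum S F = (\<lambda>p j k. \<Sum>x\<in>S. F x p j k)"

lemma ladd_apply: "ladd X Y p j k = X p j k + Y p j k"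
  unfolding ladd_def by simp

lemma lsmul_apply: "lsmul c X p j k = c * X p j k"
  unfolding lsmul_def by simp

lemma lsupp_ladd: "lsupp (ladd X Y) \<subseteq> lsupp X \<union> lsupp Y"
  unfolding lsupp_def ladd_def by (auto, metis add.right_neutral)

lemma lsupp_lsmul: "lsupp (lsmul c X) \<subseteq> lsupp X"
  unfolding lsupp_def lsmul_def by auto

lemma lsupp_lmat_sum: "lsupp (lmat_sum S F) \<subseteq> (\<Union>x\<in>S. lsupp (F x))"
proof
  fix p assume "p \<in> lsupp (lmat_sum S F)"
  then obtain j k where "(\<Sum>x\<in>S. F x p j k) \<noteq> 0"
    unfolding lsupp_def lmat_sum_def by auto
  then obtain x where "x \<in> S" "F x p j k \<noteq> 0"
    by (meson sum.not_neutral_contains_not_neutral)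
  then show "p \<in> (\<Union>x\<in>S. lsupp (F x))"
    unfolding lsupp_def by auto
qed

lemma lsupp_lmul: "lsupp (lmul N X Y) \<subseteq> (\<lambda>(p, q). p + q) ` (lsupp X \<times> lsupp Y)"
proof
  fix r assume "r \<in> lsupp (lmul N X Y)"
  then obtain j k where "(\<Sum>q\<in>lsupp X. \<Sum>l<N. X q j l * Y (r - q) l k) \<noteq> 0"
    unfolding lsupp_def lmul_def by auto
  then obtain q l where "q \<in> lsupp X" "X q j l * Y (r - q) l k \<noteq> 0"
    by (meson sum.not_neutral_contains_not_neutral)
  then show "r \<in> (\<lambda>(p, q). p + q) ` (lsupp X \<times> lsupp Y)"
    unfolding lsupp_def by (auto intro!: image_eqI[where x = "(q, r - q)"])
qed

lemma lsupp_ops: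
  "lsupp (A1op N X) \<subseteq> lsupp X \<union> {0}" "lsupp (A2op N X) \<subseteq> lsupp X \<union> {0}"
  "lsupp (Sop N X) \<subseteq> lsupp X \<union> {0}" "lsupp (Sstar N X) \<subseteq> lsupp X \<union> {0}"
  unfolding lsupp_def A1op_def A2op_def Sop_def Sstar_def R0_def Ppos_def Pneg_def P0_def Wop_def
  by (auto split: if_splits)

lemma finite_lsupp_closed:
  assumes "finite (lsupp X)" "finite (lsupp Y)"
  shows "finite (lsupp (ladd X Y))" "finite (lsupp (lsmul c X))" "finite (lsupp (lmul N X Y))"
    "finite (lsupp (A1op N X))" "finite (lsupp (A2op N X))"
    "finite (lsupp (Sop N X))" "finite (lsupp (Sstar N X))"
  using assms finite_subset[OF lsupp_ladd] finite_subset[OF lsupp_lsmul]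
    finite_subset[OF lsupp_lmul] finite_subset[OF lsupp_ops(1)] finite_subset[OF lsupp_ops(2)]
    finite_subset[OF lsupp_ops(3)] finite_subset[OF lsupp_ops(4)]
  by auto

lemma lmul_ladd_left:
  assumes "finite (lsupp X)" "finite (lsupp Y)"
  shows "lmul N (ladd X Y) Z = ladd (lmul N X Z) (lmul N Y Z)"
proof (intro ext)
  fix p j k
  let ?Q = "lsupp X \<union> lsupp Y"
  have "lmul N (ladd X Y) Z p j k = (\<Sum>q\<in>?Q. \<Sum>l<N. ladd X Y q j l * Z (p - q) l k)"
    using assms lsupp_ladd by (intro lmul_eq_sum_over) auto
  also have "\<dots> = (\<Sum>q\<in>?Q. \<Sum>l<N. X q j l * Z (p - q) l k)
                + (\<Sum>q\<in>?Q. \<Sum>l<N. Y q j l * Z (p - q) l k)"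
    by (simp add: ladd_apply distrib_right sum.distrib)
  also have "\<dots> = lmul N X Z p j k + lmul N Y Z p j k"
    using assms by (simp add: lmul_eq_sum_over[of ?Q])
  finally show "lmul N (ladd X Y) Z p j k = ladd (lmul N X Z) (lmul N Y Z) p j k"
    by (simp add: ladd_apply)
qed

lemma lmul_lsmul_left:
  assumes "finite (lsupp X)"
  shows "lmul N (lsmul c X) Z = lsmul c (lmul N X Z)"
proof (intro ext)
  fix p j k
  have "lmul N (lsmul c X) Z p j k = (\<Sum>q\<in>lsupp X. \<Sum>l<N. lsmul c X q j l * Z (p - q) l k)"
    using assms lsupp_lsmul by (intro lmul_eq_sum_over) auto
  then show "lmul N (lsmul c X) Z p j k = lsmul c (lmul N X Z) p j k"
    by (simp add: lsmul_apply lmul_def sum_distrib_left mult.assoc)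
qed

lemma lmul_ladd_right: "lmul N X (ladd Y Z) = ladd (lmul N X Y) (lmul N X Z)"
  unfolding lmul_def ladd_def by (simp add: distrib_left sum.distrib)

lemma lmul_lsmul_right: "lmul N X (lsmul c Y) = lsmul c (lmul N X Y)"
  unfolding lmul_def lsmul_def by (simp add: sum_distrib_left algebra_simps)

lemma lpair_ladd_left:
  "finite (lsupp X) \<Longrightarrow> finite (lsupp Y) \<Longrightarrow> lpair N (ladd X Y) Z = lpair N X Z + lpair N Y Z"
  unfolding lpair_def by (simp add: lmul_ladd_left ladd_apply sum.distrib)

lemma lpair_lsmul_left: "finite (lsupp X) \<Longrightarrow> lpair N (lsmul c X) Z = c * lpair N X Z"
  unfolding lpair_def by (simp add: lmul_lsmul_left lsmul_apply sum_distrib_left)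

lemma lpair_ladd_right: "lpair N X (ladd Y Z) = lpair N X Y + lpair N X Z"
  unfolding lpair_def by (simp add: lmul_ladd_right ladd_apply sum.distrib)

lemma lpair_lsmul_right: "lpair N X (lsmul c Y) = c * lpair N X Y"
  unfolding lpair_def by (simp add: lmul_lsmul_right lsmul_apply sum_distrib_left)

lemma ops_ladd:
  "A1op N (ladd X Y) = ladd (A1op N X) (A1op N Y)"
  "A2op N (ladd X Y) = ladd (A2op N X) (A2op N Y)"
  "Sop N (ladd X Y) = ladd (Sop N X) (Sop N Y)"
  "Sstar N (ladd X Y) = ladd (Sstar N X) (Sstar N Y)"
  by (auto intro!: ext simp: A1op_def A2op_def Sop_def Sstar_def Wop_def R0_def Ppos_def Pneg_def
      P0_def ladd_apply distrib_left sum.distrib)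

lemma ops_lsmul:
  "A1op N (lsmul c X) = lsmul c (A1op N X)"
  "A2op N (lsmul c X) = lsmul c (A2op N X)"
  "Sop N (lsmul c X) = lsmul c (Sop N X)"
  "Sstar N (lsmul c X) = lsmul c (Sstar N X)"
  by (auto intro!: ext simp: A1op_def A2op_def Sop_def Sstar_def Wop_def R0_def Ppos_def Pneg_def
      P0_def lsmul_apply sum_distrib_left algebra_simps)

lemma lmat_linear_lpair: "lmat_linear (\<lambda>H. lpair N H V)"
  unfolding lmat_linear_def by (simp add: lpair_ladd_left lpair_lsmul_left)

lemma lmat_linear_pb2_form_right: "finite (lsupp L) \<Longrightarrow> lmat_linear (\<lambda>H. pb2_form N L G H)"
  unfolding lmat_linear_def pb2_form_def
  by (simp add: lmul_ladd_left lmul_lsmul_left lmul_ladd_right lmul_lsmul_right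
      lpair_ladd_right lpair_lsmul_right algebra_simps)

lemma lmat_linear_pb2_form_left: "finite (lsupp L) \<Longrightarrow> lmat_linear (\<lambda>G. pb2_form N L G H)"
  unfolding lmat_linear_def pb2_form_def
  by (simp add: lmul_ladd_left lmul_lsmul_left lmul_ladd_right lmul_lsmul_right ops_ladd ops_lsmul
      lpair_ladd_left lpair_lsmul_left finite_lsupp_closed algebra_simps)

lemma lmat_linear_sum:
  assumes f: "lmat_linear f" and S: "finite S" and F: "\<And>x. x \<in> S \<Longrightarrow> finite (lsupp (F x))"
  shows "f (lmat_sum S F) = (\<Sum>x\<in>S. f (F x))"
  using S F
proof (induction S rule: finite_induct)
  case empty
  have "lmat_sum {} F = lsmul 0 (lmat_sum {} F)" "finite (lsupp (lmat_sum {} F))"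
    unfolding lmat_sum_def lsmul_def lsupp_def by simp_all
  then show ?case
    using f unfolding lmat_linear_def by (metis mult_zero_left sum.empty)
next
  case (insert x S)
  have "lmat_sum (insert x S) F = ladd (F x) (lmat_sum S F)"
    using insert.hyps unfolding lmat_sum_def ladd_def by simp
  moreover have "finite (lsupp (lmat_sum S F))"
    using insert.hyps insert.prems by (intro finite_subset[OF lsupp_lmat_sum]) auto
  ultimately show ?case
    using f insert unfolding lmat_linear_def by simp
qed

lemma lmat_expansion:
  assumes N: "0 < N" and H: "H \<in> gset N"
  shows "H = lmat_sum (lsupp H \<times> {..<N})
    (\<lambda>(q, u). lsmul (H q u (resid N (int u - q))) (elem N q (int u)))"
proof (intro ext)
  fix p j k
  have "lmat_sum (lsupp H \<times> {..<N})
      (\<lambda>(q, u). lsmul (H q u (resid N (int u - q))) (elem N q (int u))) p j k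
     = (\<Sum>x\<in>lsupp H \<times> {..<N}. if x = (p, j)
          then (if k = resid N (int j - p) then H p j (resid N (int j - p)) else 0) else 0)"
    unfolding lmat_sum_def
  proof (intro sum.cong refl)
    fix x assume "x \<in> lsupp H \<times> {..<N}"
    then obtain q u where "x = (q, u)" "u < N" by auto
    then show "(case x of (q, u) \<Rightarrow> lsmul (H q u (resid N (int u - q))) (elem N q (int u))) p j k
      = (if x = (p, j)
         then (if k = resid N (int j - p) then H p j (resid N (int j - p)) else 0) else 0)"
      by (auto simp: lsmul_def elem_def resid_of_nat)
  qed
  also have "\<dots> = H p j k"
  proof (cases "H p j k = 0")
    case False
    then have "p \<in> lsupp H" unfolding lsupp_def by auto
    then show ?thesis
      using gset_nonzero_entry[OF H False] gset_finite_lsupp[OF H] by (simp add: sum.delta')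
  qed (use gset_finite_lsupp[OF H] in \<open>auto simp: sum.delta'\<close>)
  finally show "H p j k = lmat_sum (lsupp H \<times> {..<N})
      (\<lambda>(q, u). lsmul (H q u (resid N (int u - q))) (elem N q (int u))) p j k"
    by simp
qed

lemma lmat_linear_expansion:
  assumes f: "lmat_linear f" and N: "0 < N" and H: "H \<in> gset N"
  shows "f H = (\<Sum>(q, u)\<in>lsupp H \<times> {..<N}. H q u (resid N (int u - q)) * f (elem N q (int u)))"
proof -
  have "f H = (\<Sum>x\<in>lsupp H \<times> {..<N}.
      f ((\<lambda>(q, u). lsmul (H q u (resid N (int u - q))) (elem N q (int u))) x))"
    using gset_finite_lsupp[OF H] lsupp_elem[OF N]
    by (subst lmat_expansion[OF N H]) (auto intro!: lmat_linear_sum[OF f] finite_lsupp_closed)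
  also have "\<dots> = (\<Sum>(q, u)\<in>lsupp H \<times> {..<N}. H q u (resid N (int u - q)) * f (elem N q (int u)))"
    using f lsupp_elem[OF N] unfolding lmat_linear_def by (intro sum.cong refl) auto
  finally show ?thesis .
qed

lemma lsmul_in_gset: "X \<in> gset N \<Longrightarrow> lsmul c X \<in> gset N"
  by (rule in_gsetI)
    (auto simp: lsmul_apply gset_nonzero_entry gset_finite_lsupp
      intro: finite_subset[OF lsupp_lsmul])

lemma Tmat_ladd_in_Tset:
  assumes N: "0 < N" and V: "V \<in> gset N" and deg: "\<And>p j k. - p \<notin> {0..int m} \<Longrightarrow> V p j k = 0"
  shows "ladd (Tmat N m b a) V \<in> Tset N m"
proof -
  define b' where "b' = (\<lambda>u. b u + V 0 u u)"
  define a' where "a' = (\<lambda>s u. a s u + V (- int s) u (resid N (int u + int s)))"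
  have "ladd (Tmat N m b a) V p j k = Tmat N m b' a' p j k" for p j k
  proof (cases "j < N \<and> k < N \<and> k = resid N (int j - p)")
    case False
    then have "V p j k = 0"
      using gset_nonzero_entry[OF V] by blast
    then show ?thesis
      using False by (auto simp: ladd_apply Tmat_apply[OF N] eq_resid_iff[OF N])
  next
    case True
    consider "-p = 0" | "1 \<le> -p \<and> -p \<le> int m" | "-p \<notin> {0..int m}"
      by fastforce
    then have "tcoef m b' a' (-p) j = tcoef m b a (-p) j + V p j k"
      by cases (use True deg in \<open>auto simp: tcoef_def b'_def a'_def resid_of_nat\<close>)
    moreover have "int k = (int j - p) mod int N"
      using True by (simp add: eq_resid_iff[OF N])
    ultimately show ?thesis
      using True by (simp add: ladd_apply Tmat_apply[OF N])
  qed
  then show ?thesis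
    unfolding Tset_def by blast
qed

text \<open>The vector V with pairing lpair N H V = pb2_form N L G H for all H; for G the gradient
  of phi at L it is the Hamiltonian vector field of phi.\<close>

definition ham_field :: "nat \<Rightarrow> lmat \<Rightarrow> lmat \<Rightarrow> lmat" where
  "ham_field N L G = (\<lambda>p j k.
     if j < N \<and> k < N \<and> k = resid N (int j - p) then pb2_form N L G (elem N (-p) (int k)) else 0)"

lemma lpair_elem_ham_field:
  assumes N: "0 < N"
  shows "lpair N (elem N q a) (ham_field N L G) = pb2_form N L G (elem N q a)"
proof -
  have "resid N (int (resid N (a - q)) - - q) = resid N a"
    using resid_resid_diff[OF N, of "a - q" "-q"] by simp
  then show ?thesis
    unfolding lpair_elem_left[OF N] ham_field_def using resid_less[OF N]
    by (simp add: elem_resid[OF N])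
qed

lemma lpair_ham_field:
  assumes N: "0 < N" and L: "finite (lsupp L)" and H: "H \<in> gset N"
  shows "lpair N H (ham_field N L G) = pb2_form N L G H"
  using lmat_linear_expansion[OF lmat_linear_lpair N H, of N "ham_field N L G"]
    lmat_linear_expansion[OF lmat_linear_pb2_form_right[OF L] N H, of N G]
  by (simp add: lpair_elem_ham_field[OF N])

context Tmat_point_wide
begin

lemma pb2_form_Tmat_outside:
  assumes G: "G \<in> gset N" and q: "q \<notin> {0..int m}"
  shows "pb2_form N T G (elem N q c) = 0"
proof -
  have "pb2_form N T (elem N p (int u)) (elem N q c) = 0" for p u
    using pb2_form_Tmat_elem_outside[OF q, of p "int u - p" "c - q"] by simp
  then show ?thesis
    using lmat_linear_expansion[OF lmat_linear_pb2_form_left[OF finite_lsupp_Tmat[OF N]] N G]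
    by simp
qed

lemma ham_field_Tmat_outside:
  assumes "G \<in> gset N" "- p \<notin> {0..int m}"
  shows "ham_field N T G p j k = 0"
  unfolding ham_field_def using pb2_form_Tmat_outside[OF assms] by simp

lemma ham_field_Tmat_in_gset:
  assumes G: "G \<in> gset N"
  shows "ham_field N T G \<in> gset N"
proof (rule in_gsetI)
  have "lsupp (ham_field N T G) \<subseteq> {- int m..0}"
  proof
    fix p assume "p \<in> lsupp (ham_field N T G)"
    then have "- p \<in> {0..int m}"
      using ham_field_Tmat_outside[OF G] unfolding lsupp_def by blast
    then show "p \<in> {- int m..0}" by auto
  qed
  then show "finite (lsupp (ham_field N T G))"
    by (rule finite_subset) simp
qed (auto simp: ham_field_def split: if_splits)

lemma Tmat_add_ham_field:
  assumes G: "G \<in> gset N"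
  shows "ladd T (lsmul t (ham_field N T G)) \<in> Tset N m"
proof (rule Tmat_ladd_in_Tset[OF N])
  show "lsmul t (ham_field N T G) \<in> gset N"
    by (rule lsmul_in_gset[OF ham_field_Tmat_in_gset[OF G]])
  show "lsmul t (ham_field N T G) p j k = 0" if "- p \<notin> {0..int m}" for p j k
    using ham_field_Tmat_outside[OF G that] by (simp add: lsmul_apply)
qed

end

lemma Tset_poisson_submanifold:
  assumes N: "0 < N" and Nm: "m + 2 \<le> N"
  shows "poisson_submanifold N (PB2 N) (Tset N m)"
  unfolding poisson_submanifold_def
proof (intro conjI ballI allI impI)
  show "Tset N m \<subseteq> gset N"
    unfolding Tset_def using Tmat_in_gset[OF N] by blast
  fix L \<phi> assume "L \<in> Tset N m" and "\<exists>G. has_grad N \<phi> L G"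
  then obtain b a G where L: "L = Tmat N m b a" and G: "has_grad N \<phi> L G"
    unfolding Tset_def by blast
  interpret Tmat_point_wide N m b a
    by unfold_locales (use N Nm in auto)
  have G_gset: "G \<in> gset N"
    using G unfolding has_grad_def by blast
  let ?V = "ham_field N L G"
  show "\<exists>V. (\<forall>t. ladd L (lsmul t V) \<in> Tset N m) \<and>
          (\<forall>\<psi>. (\<exists>H. has_grad N \<psi> L H) \<longrightarrow>
             ((\<lambda>\<epsilon>. \<psi> (ladd L (lsmul \<epsilon> V))) has_field_derivative PB2 N \<phi> \<psi> L) (at 0))"
  proof (intro exI conjI allI impI)
    show "ladd L (lsmul t ?V) \<in> Tset N m" for t
      unfolding L by (rule Tmat_add_ham_field[OF G_gset[unfolded L]])
    fix \<psi> assume "\<exists>H. has_grad N \<psi> L H"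
    then obtain H where H: "has_grad N \<psi> L H" by blast
    then have "H \<in> gset N"
      unfolding has_grad_def by blast
    then have "lpair N H ?V = pb2_form N L G H"
      using lpair_ham_field[OF N] finite_lsupp_Tmat[OF N] L by blast
    then have "lpair N H ?V = PB2 N \<phi> \<psi> L"
      unfolding PB2_eq_pb2_form grad_eqI[OF N G] grad_eqI[OF N H] .
    moreover have "?V \<in> gset N"
      unfolding L by (rule ham_field_Tmat_in_gset[OF G_gset[unfolded L]])
    ultimately show "((\<lambda>\<epsilon>. \<psi> (ladd L (lsmul \<epsilon> ?V))) has_field_derivative PB2 N \<phi> \<psi> L) (at 0)"
      using H unfolding has_grad_def by metis
  qed
qed

section \<open>Brackets of coordinate functions\<close>

context Tmat_point
begin

lemma coord_Tmat: "0 \<le> i \<Longrightarrow> coord N m i k T = tc i k"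
  using Tmat_diagonal_entry[of i k] Tmat_diagonal_entry[of 0 k]
  by (auto simp: coord_def tcoef_def resid_def)

end

locale Tmat_point_distinct = Tmat_point +
  assumes m_pos: "1 \<le> m" and N_distinct: "2 * m + 2 \<le> N"
begin

sublocale Tmat_point_wide
  using N_distinct by unfold_locales simp

lemma PB2_coord_Tmat:
  assumes i: "0 \<le> i" "i \<le> int m" and j: "0 \<le> j" "j \<le> int m"
  shows "PB2 N (coord N m i k) (coord N m j l) T
    = (pb2_conv N m b a i k j l
       + tc i k * tc j l * of_int (wcorr_closed N i j ((l - k) mod int N))) / 2"
  using pb2_form_Tmat_elem[of i k j l] wcorr_eq_closed[OF i j N_distinct, of k l]
  unfolding PB2_eq_pb2_form
    grad_eqI[OF N has_grad_coord[OF N i]] grad_eqI[OF N has_grad_coord[OF N j]]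
  by (simp add: field_simps)

lemma pb2_conv_single:
  assumes others: "\<And>s. -1 \<le> s \<Longrightarrow> s \<le> int m \<Longrightarrow> s \<noteq> d + j \<Longrightarrow> int N dvd (d + j - s)
      \<Longrightarrow> tc (i + j - s) (k + d) = 0"
  shows "pb2_conv N m b a i k j (k + d)
    = (of_int (sgn (i - (d + j))) + of_int (sgn (j - (d + j)))) * tc (d + j) k * tc (i - d) (k + d)"
  (is "_ = ?term")
proof (cases "d + j \<in> {-1..int m}")
  case True
  have "pb2_conv N m b a i k j (k + d) = (\<Sum>s\<in>{-1..int m}. if s = d + j then ?term else 0)"
    unfolding pb2_conv_def using others by (intro sum.cong refl) auto
  then show ?thesis
    using True by simp
next
  case False
  then have "tc (d + j) k = 0"
    using tcoef_nonzero by fastforce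
  moreover have "pb2_conv N m b a i k j (k + d) = 0"
    unfolding pb2_conv_def using False others by (intro sum.neutral) auto
  ultimately show ?thesis by simp
qed

lemma PB2_coord_Tmat_shift:
  assumes i: "0 \<le> i" "i \<le> int m" and j: "0 \<le> j" "j \<le> int m"
    and others: "\<And>s. -1 \<le> s \<Longrightarrow> s \<le> int m \<Longrightarrow> s \<noteq> d + j \<Longrightarrow> int N dvd (d + j - s)
      \<Longrightarrow> tc (i + j - s) (k + d) = 0"
  shows "PB2 N (coord N m i k) (coord N m j (k + d)) T
    = ((of_int (sgn (i - (d + j))) + of_int (sgn (j - (d + j)))) * tc (d + j) k * tc (i - d) (k + d)
       + tc i k * tc j (k + d) * of_int (wcorr_closed N i j (d mod int N))) / 2"
  using PB2_coord_Tmat[OF i j, of k "k + d"] pb2_conv_single[OF others] by simp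

lemma PB2_coord_Tmat_near:
  assumes i: "0 \<le> i" "i \<le> int m" and j: "0 \<le> j" "j \<le> int m"
    and near: "\<And>s. -1 \<le> s \<Longrightarrow> s \<le> int m \<Longrightarrow> \<bar>d + j - s\<bar> < int N"
  shows "PB2 N (coord N m i k) (coord N m j (k + d)) T
    = ((of_int (sgn (i - (d + j))) + of_int (sgn (j - (d + j)))) * tc (d + j) k * tc (i - d) (k + d)
       + tc i k * tc j (k + d) * of_int (wcorr_closed N i j (d mod int N))) / 2"
proof (rule PB2_coord_Tmat_shift[OF i j])
  fix s assume "-1 \<le> s" "s \<le> int m" "s \<noteq> d + j" "int N dvd (d + j - s)"
  then show "tc (i + j - s) (k + d) = 0"
    using near[of s] dvd_imp_le_int[of "d + j - s" "int N"] by auto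
qed

lemma N_distinct_int: "2 * int m + 2 \<le> int N"
  using N_distinct by linarith

lemma PB2_b_b_succ: "PB2 N (coord N m 0 k) (coord N m 0 (k + 1)) T = - coord N m 1 k T"
proof -
  have "PB2 N (coord N m 0 k) (coord N m 0 (k + 1)) T =
    ((of_int (sgn (0 - (1 + 0))) + of_int (sgn (0 - (1 + 0)))) * tc (1 + 0) k * tc (0 - 1) (k + 1)
       + tc 0 k * tc 0 (k + 1) * of_int (wcorr_closed N 0 0 (1 mod int N))) / 2"
    by (rule PB2_coord_Tmat_near) (use m_pos N_distinct_int in \<open>auto simp: abs_less_iff\<close>)
  moreover have "wcorr_closed N 0 0 (1 mod int N) = 0"
    using N_distinct by (simp add: wcorr_closed_def)
  ultimately show ?thesis
    by (simp add: coord_Tmat)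
qed

lemma PB2_b_a_succ:
  assumes j: "1 \<le> j" "j \<le> int m"
  shows "PB2 N (coord N m 0 k) (coord N m j (k + 1)) T = - coord N m (j + 1) k T"
proof -
  have "PB2 N (coord N m 0 k) (coord N m j (k + 1)) T =
    ((of_int (sgn (0 - (1 + j))) + of_int (sgn (j - (1 + j)))) * tc (1 + j) k * tc (0 - 1) (k + 1)
       + tc 0 k * tc j (k + 1) * of_int (wcorr_closed N 0 j (1 mod int N))) / 2"
    by (rule PB2_coord_Tmat_near) (use N_distinct_int j in \<open>auto simp: abs_less_iff\<close>)
  moreover have "wcorr_closed N 0 j (1 mod int N) = 0"
    using N_distinct_int j by (simp add: wcorr_closed_def)
  ultimately show ?thesis
    using j by (simp add: coord_Tmat sgn_if add.commute)
qed

lemma PB2_a_b_shift: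
  assumes j: "1 \<le> j" "j \<le> int m"
  shows "PB2 N (coord N m j k) (coord N m 0 (k + j + 1)) T = - coord N m (j + 1) k T"
proof -
  have "PB2 N (coord N m j k) (coord N m 0 (k + (j + 1))) T =
    ((of_int (sgn (j - ((j + 1) + 0))) + of_int (sgn (0 - ((j + 1) + 0))))
       * tc ((j + 1) + 0) k * tc (j - (j + 1)) (k + (j + 1))
     + tc j k * tc 0 (k + (j + 1)) * of_int (wcorr_closed N j 0 ((j + 1) mod int N))) / 2"
    by (rule PB2_coord_Tmat_near) (use N_distinct_int j in \<open>auto simp: abs_less_iff\<close>)
  moreover have "wcorr_closed N j 0 ((j + 1) mod int N) = 0"
    using N_distinct_int j by (simp add: wcorr_closed_def)
  ultimately show ?thesis
    using j by (simp add: coord_Tmat sgn_if add.assoc)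
qed

lemma PB2_b_a_same:
  assumes j: "1 \<le> j" "j \<le> int m"
  shows "PB2 N (coord N m 0 k) (coord N m j k) T = - coord N m 0 k T * coord N m j k T"
proof -
  have "PB2 N (coord N m 0 k) (coord N m j (k + 0)) T =
    ((of_int (sgn (0 - (0 + j))) + of_int (sgn (j - (0 + j)))) * tc (0 + j) k * tc (0 - 0) (k + 0)
       + tc 0 k * tc j (k + 0) * of_int (wcorr_closed N 0 j (0 mod int N))) / 2"
    by (rule PB2_coord_Tmat_near) (use N_distinct_int j in \<open>auto simp: abs_less_iff\<close>)
  moreover have "wcorr_closed N 0 j (0 mod int N) = -1"
    using N_distinct_int j by (simp add: wcorr_closed_def)
  ultimately show ?thesis
    using j by (simp add: coord_Tmat sgn_if)
qed

lemma PB2_a_b_end: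
  assumes j: "1 \<le> j" "j \<le> int m"
  shows "PB2 N (coord N m j k) (coord N m 0 (k + j)) T = - coord N m j k T * coord N m 0 (k + j) T"
proof -
  have "PB2 N (coord N m j k) (coord N m 0 (k + j)) T =
    ((of_int (sgn (j - (j + 0))) + of_int (sgn (0 - (j + 0)))) * tc (j + 0) k * tc (j - j) (k + j)
       + tc j k * tc 0 (k + j) * of_int (wcorr_closed N j 0 (j mod int N))) / 2"
    by (rule PB2_coord_Tmat_near) (use N_distinct_int j in \<open>auto simp: abs_less_iff\<close>)
  moreover have "wcorr_closed N j 0 (j mod int N) = -1"
    using N_distinct_int j by (simp add: wcorr_closed_def)
  ultimately show ?thesis
    using j by (simp add: coord_Tmat sgn_if)
qed

lemma PB2_a_a_shift:
  assumes i: "1 \<le> i" "i \<le> int m" and j: "1 \<le> j" "j \<le> int m"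
  shows "PB2 N (coord N m i k) (coord N m j (k + i + 1)) T = - coord N m (i + j + 1) k T"
proof -
  have "PB2 N (coord N m i k) (coord N m j (k + (i + 1))) T =
    ((of_int (sgn (i - ((i + 1) + j))) + of_int (sgn (j - ((i + 1) + j))))
       * tc ((i + 1) + j) k * tc (i - (i + 1)) (k + (i + 1))
     + tc i k * tc j (k + (i + 1)) * of_int (wcorr_closed N i j ((i + 1) mod int N))) / 2"
  proof (rule PB2_coord_Tmat_shift)
    fix s assume s: "-1 \<le> s" "s \<le> int m" "s \<noteq> (i + 1) + j" "int N dvd ((i + 1) + j - s)"
    \<comment> \<open>a second congruent index would push i + j - s beyond m\<close>
    have "i + j - s > int m"
    proof (rule ccontr)
      assume "\<not> i + j - s > int m"
      then have "\<bar>(i + 1) + j - s\<bar> < int N"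
        using s i j N_distinct_int by (auto simp: abs_less_iff)
      then show False
        using s dvd_imp_le_int[of "(i + 1) + j - s" "int N"] by auto
    qed
    then show "tc (i + j - s) (k + (i + 1)) = 0"
      using tcoef_nonzero by fastforce
  qed (use i j in auto)
  also have "\<dots> = - tc (i + j + 1) k"
  proof -
    have "wcorr_closed N i j ((i + 1) mod int N) = 0"
      using N_distinct_int i j by (simp add: wcorr_closed_def)
    moreover have "sgn (i - ((i + 1) + j)) = -1" "sgn (j - ((i + 1) + j)) = -1"
      using i j by (simp_all add: sgn_if)
    ultimately show ?thesis
      by (simp add: algebra_simps)
  qed
  finally show ?thesis
    using i j by (simp add: coord_Tmat add.assoc)
qed

lemma PB2_a_a_same:
  assumes i: "1 \<le> i" and ij: "i < j" and j: "j \<le> int m"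
  shows "PB2 N (coord N m i k) (coord N m j k) T = - coord N m i k T * coord N m j k T"
proof -
  have "PB2 N (coord N m i k) (coord N m j (k + 0)) T =
    ((of_int (sgn (i - (0 + j))) + of_int (sgn (j - (0 + j)))) * tc (0 + j) k * tc (i - 0) (k + 0)
       + tc i k * tc j (k + 0) * of_int (wcorr_closed N i j (0 mod int N))) / 2"
    by (rule PB2_coord_Tmat_near) (use N_distinct_int i ij j in \<open>auto simp: abs_less_iff\<close>)
  moreover have "wcorr_closed N i j (0 mod int N) = -1"
    using N_distinct_int i ij j by (simp add: wcorr_closed_def)
  ultimately show ?thesis
    using i ij j by (simp add: coord_Tmat sgn_if)
qed

lemma PB2_a_a_end:
  assumes i: "1 \<le> i" and ij: "i < j" and j: "j \<le> int m"
  shows "PB2 N (coord N m j k) (coord N m i (k + j - i)) T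
    = - coord N m j k T * coord N m i (k + j - i) T"
proof -
  have "PB2 N (coord N m j k) (coord N m i (k + (j - i))) T =
    ((of_int (sgn (j - ((j - i) + i))) + of_int (sgn (i - ((j - i) + i))))
       * tc ((j - i) + i) k * tc (j - (j - i)) (k + (j - i))
     + tc j k * tc i (k + (j - i)) * of_int (wcorr_closed N j i ((j - i) mod int N))) / 2"
    by (rule PB2_coord_Tmat_near) (use N_distinct_int i ij j in \<open>auto simp: abs_less_iff\<close>)
  moreover have "wcorr_closed N j i ((j - i) mod int N) = -1"
    using N_distinct_int i ij j by (simp add: wcorr_closed_def)
  ultimately show ?thesis
    using i ij j by (simp add: coord_Tmat sgn_if algebra_simps)
qed

lemma PB2_a_a_overlap:
  assumes i: "1 \<le> i" and ij: "i \<le> j" and j: "j \<le> int m" and r: "1 \<le> r" "r \<le> i"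
  shows "PB2 N (coord N m i k) (coord N m j (k + r)) T
     = - coord N m i k T * coord N m j (k + r) T
       - coord N m (j + r) k T * coord N m (i - r) (k + r) T"
proof -
  have "PB2 N (coord N m i k) (coord N m j (k + r)) T =
    ((of_int (sgn (i - (r + j))) + of_int (sgn (j - (r + j)))) * tc (r + j) k * tc (i - r) (k + r)
       + tc i k * tc j (k + r) * of_int (wcorr_closed N i j (r mod int N))) / 2"
    by (rule PB2_coord_Tmat_near) (use N_distinct_int i ij j r in \<open>auto simp: abs_less_iff\<close>)
  also have "\<dots> = - tc i k * tc j (k + r) - tc (j + r) k * tc (i - r) (k + r)"
  proof -
    have "wcorr_closed N i j (r mod int N) = -2"
      using N_distinct_int i ij j r by (simp add: wcorr_closed_def sgn_if)
    moreover have "sgn (i - (r + j)) = -1" "sgn (j - (r + j)) = -1"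
      using i ij j r by (simp_all add: sgn_if)
    ultimately show ?thesis
      by (simp add: field_simps add.commute)
  qed
  finally show ?thesis
    using i ij j r by (simp add: coord_Tmat)
qed

lemma PB2_a_a_overlap_rev:
  assumes i: "1 \<le> i" and ij: "i \<le> j" and j: "j \<le> int m" and r: "j - i + 1 \<le> r" "r \<le> j"
  shows "PB2 N (coord N m j k) (coord N m i (k + r)) T
     = - coord N m j k T * coord N m i (k + r) T
       - coord N m (i + r) k T * coord N m (j - r) (k + r) T"
proof -
  have "PB2 N (coord N m j k) (coord N m i (k + r)) T =
    ((of_int (sgn (j - (r + i))) + of_int (sgn (i - (r + i)))) * tc (r + i) k * tc (j - r) (k + r)
       + tc j k * tc i (k + r) * of_int (wcorr_closed N j i (r mod int N))) / 2"
    by (rule PB2_coord_Tmat_near) (use N_distinct_int i ij j r in \<open>auto simp: abs_less_iff\<close>)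
  also have "\<dots> = - tc j k * tc i (k + r) - tc (i + r) k * tc (j - r) (k + r)"
  proof -
    have "wcorr_closed N j i (r mod int N) = -2"
      using N_distinct_int i ij j r by (simp add: wcorr_closed_def sgn_if)
    moreover have "sgn (j - (r + i)) = -1" "sgn (i - (r + i)) = -1"
      using i ij j r by (simp_all add: sgn_if)
    ultimately show ?thesis
      by (simp add: field_simps add.commute)
  qed
  finally show ?thesis
    using i ij j r by (simp add: coord_Tmat)
qed

end

lemma sgn_add_sgn_nonzero_cases:
  fixes i j s :: int
  assumes "sgn (i - s) + sgn (j - s) \<noteq> 0"
  obtains "i < s" "j < s" | "s < i" "s < j" | "s = i" "j < i" | "s = i" "i < j"
    | "s = j" "i < j" | "s = j" "j < i"
proof -
  have "sgn (i - s) = (if i < s then -1 else if i = s then 0 else 1)"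
    "sgn (j - s) = (if j < s then -1 else if j = s then 0 else 1)"
    by (simp_all add: sgn_if)
  with assms that show ?thesis
    by (auto split: if_splits)
qed

lemma listed_succ:
  assumes "0 \<le> i" "i \<le> int m" "0 \<le> j" "j \<le> int m" "int N dvd (l - k - (i + 1))"
  shows "listed N m i k j l"
proof -
  consider "i = 0" "j = 0" | "i = 0" "1 \<le> j" | "1 \<le> i" "j = 0" | "1 \<le> i" "1 \<le> j"
    using assms by linarith
  then show ?thesis
    using assms unfolding listed_def Let_def dvd_eq_mod_eq_0 by cases simp_all
qed

lemma listed_same:
  assumes "0 \<le> i" "i < j" "j \<le> int m" "int N dvd (l - k)"
  shows "listed N m i k j l"
proof -
  consider "i = 0" | "1 \<le> i"
    using assms by linarith
  then show ?thesis
    using assms unfolding listed_def Let_def dvd_eq_mod_eq_0 by cases simp_all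
qed

lemma listed_overlap:
  assumes "0 \<le> i" "i \<le> int m" "0 \<le> j" "j \<le> int m" "1 \<le> e" "e \<le> i" "i \<le> e + j"
    and "int N dvd (l - k - e)"
  shows "listed N m i k j l"
proof -
  consider "j = 0" "e = i" | "1 \<le> j" "e = i - j" | "1 \<le> j" "i \<le> j" | "1 \<le> j" "j < i" "i - j + 1 \<le> e"
    using assms by linarith
  then show ?thesis
  proof cases
    case 3
    then have "1 \<le> i \<and> i \<le> j \<and> j \<le> int m \<and> (\<exists>r. 1 \<le> r \<and> r \<le> i \<and> (l - k - r) mod int N = 0)"
      using assms by (auto simp: dvd_eq_mod_eq_0)
    then show ?thesis
      unfolding listed_def Let_def by simp
  next
    case 4
    then have "1 \<le> j \<and> j \<le> i \<and> i \<le> int m \<and> (\<exists>r. i - j + 1 \<le> r \<and> r \<le> i \<and> (l - k - r) mod int N = 0)"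
      using assms by (auto simp: dvd_eq_mod_eq_0)
    then show ?thesis
      unfolding listed_def Let_def by simp
  qed (use assms in \<open>simp_all add: listed_def Let_def dvd_eq_mod_eq_0\<close>)
qed

lemma listed_above:
  assumes "0 \<le> i" "i \<le> int m" "0 \<le> j" "j \<le> int m" "i < s" "j < s" "-1 \<le> i + j - s"
    and "int N dvd (l + j - k - s)"
  shows "listed N m i k j l"
proof -
  have "int N dvd (l - k - (s - j))"
    using assms(8) by (simp add: algebra_simps)
  show ?thesis
  proof (cases "s - j = i + 1")
    case True
    then show ?thesis
      using listed_succ[of i m j N l k] assms(1-4) \<open>int N dvd (l - k - (s - j))\<close> by simp
  next
    case False
    then show ?thesis
      using listed_overlap[of i m j "s - j" N l k] assms(1-7) \<open>int N dvd (l - k - (s - j))\<close>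
      by simp
  qed
qed

lemma listed_of_conv_term:
  assumes i: "0 \<le> i" "i \<le> int m" and j: "0 \<le> j" "j \<le> int m"
    and s: "-1 \<le> s" "-1 \<le> i + j - s" and dv: "int N dvd (l + j - k - s)"
    and nz: "sgn (i - s) + sgn (j - s) \<noteq> 0"
  shows "listed N m i k j l \<or> listed N m j l i k"
proof -
  have dv': "int N dvd (k + i - l - (i + j - s))"
    using dv by (subst dvd_diff_commute) (simp add: algebra_simps)
  from nz show ?thesis
  proof (cases rule: sgn_add_sgn_nonzero_cases)
    case 1
    then show ?thesis using listed_above[OF i j _ _ s(2) dv] by simp
  next
    case 2
    then show ?thesis using listed_above[OF j i _ _ _ dv'] s by simp
  next
    case 3
    then show ?thesis
      using listed_overlap[OF i j, of "i - j" N l k] dv j by (simp add: algebra_simps)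
  next
    case 4
    then show ?thesis
      using listed_overlap[OF j i, of "j - i" N k l] dv' i by (simp add: algebra_simps)
  next
    case 5
    then show ?thesis using listed_same[OF i(1) _ j(2), of N l k] dv by simp
  next
    case 6
    then show ?thesis using listed_same[OF j(1) _ i(2), of N k l] dv' by simp
  qed
qed

lemma pb2_conv_unlisted:
  assumes i: "0 \<le> i" "i \<le> int m" and j: "0 \<le> j" "j \<le> int m"
    and unlisted: "\<not> listed N m i k j l" "\<not> listed N m j l i k"
  shows "pb2_conv N m b a i k j l = 0"
proof (rule pb2_conv_eq_0I)
  fix s assume s: "-1 \<le> s" "s \<le> int m" "int N dvd (l + j - k - s)"
    "tcoef m b a (i + j - s) (resid N l) \<noteq> 0"
  then have "-1 \<le> i + j - s"
    using tcoef_nonzero by blast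
  then show "sgn (i - s) + sgn (j - s) = 0"
    using listed_of_conv_term[OF i j s(1) _ s(3)] unlisted by blast
qed

lemma wcorr_closed_unlisted:
  assumes N: "0 < N" and i: "0 \<le> i" "i \<le> int m" and j: "0 \<le> j" "j \<le> int m"
    and unlisted: "\<not> listed N m i k j l" "\<not> listed N m j l i k"
  shows "wcorr_closed N i j ((l - k) mod int N) = 0"
proof -
  define d where "d = (l - k) mod int N"
  have "int N dvd (l - k - d)"
    unfolding d_def by (simp add: minus_mod_eq_mult_div)
  then have dvd_lk: "int N dvd (l - k - d)" and dvd_kl: "int N dvd (k - l - (int N - d))"
    by (auto simp: dvd_diff_commute[of _ "l - k - d"] algebra_simps
        intro: dvd_diff[of _ _ "int N", simplified])
  have "(if d = 0 then sgn (i - j) else 0) = 0"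
  proof (cases "d = 0 \<and> i \<noteq> j")
    case True
    then have "int N dvd (l - k)" "int N dvd (k - l)"
      using dvd_lk by (simp_all add: dvd_diff_commute)
    then show ?thesis
      using listed_same[OF i(1) _ j(2), of N l k] listed_same[OF j(1) _ i(2), of N k l]
        True unlisted
      by (cases "i < j") auto
  qed auto
  moreover have "(if 1 \<le> d \<and> d \<le> i then 1 + sgn (d + j - i) else 0) = 0"
    using listed_overlap[OF i j, of d N l k] dvd_lk unlisted by (auto simp: sgn_if)
  moreover have "(if 1 \<le> int N - d \<and> int N - d \<le> j then 1 + sgn (int N - d + i - j) else 0) = 0"
    using listed_overlap[OF j i, of "int N - d" N k l] dvd_kl unlisted by (auto simp: sgn_if)
  ultimately show ?thesis
    unfolding wcorr_closed_def d_def[symmetric] by simp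
qed

context Tmat_point_distinct
begin

lemma PB2_coord_Tmat_unlisted:
  assumes "0 \<le> i" "i \<le> int m" "0 \<le> j" "j \<le> int m"
    and "\<not> listed N m i k j l" "\<not> listed N m j l i k"
  shows "PB2 N (coord N m i k) (coord N m j l) T = 0"
  using PB2_coord_Tmat[OF assms(1-4), of k l] pb2_conv_unlisted[OF assms, of b a]
    wcorr_closed_unlisted[OF N assms]
  by simp

end

theorem mainTheorem4:
  fixes N m :: nat
  assumes "1 \<le> m" and "2 * m + 2 \<le> N"
  shows "poisson_submanifold N (PB2 N) (Tset N m)
   \<and> (\<forall>L\<in>Tset N m. \<forall>k::int.
       PB2 N (coord N m 0 k) (coord N m 0 (k + 1)) L = - coord N m 1 k L
     \<and> (\<forall>j\<in>{1..int m}.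
          PB2 N (coord N m 0 k) (coord N m j (k + 1)) L = - coord N m (j + 1) k L
        \<and> PB2 N (coord N m j k) (coord N m 0 (k + j + 1)) L = - coord N m (j + 1) k L
        \<and> PB2 N (coord N m 0 k) (coord N m j k) L = - coord N m 0 k L * coord N m j k L
        \<and> PB2 N (coord N m j k) (coord N m 0 (k + j)) L = - coord N m j k L * coord N m 0 (k + j) L)
     \<and> (\<forall>i\<in>{1..int m}. \<forall>j\<in>{1..int m}.
          PB2 N (coord N m i k) (coord N m j (k + i + 1)) L = - coord N m (i + j + 1) k L
        \<and> (i < j \<longrightarrow>
             PB2 N (coord N m i k) (coord N m j k) L = - coord N m i k L * coord N m j k L
           \<and> PB2 N (coord N m j k) (coord N m i (k + j - i)) L
               = - coord N m j k L * coord N m i (k + j - i) L)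
        \<and> (i \<le> j \<longrightarrow> (\<forall>r\<in>{1..i}.
             PB2 N (coord N m i k) (coord N m j (k + r)) L
               = - coord N m i k L * coord N m j (k + r) L
                 - coord N m (j + r) k L * coord N m (i - r) (k + r) L))
        \<and> (i \<le> j \<longrightarrow> (\<forall>r\<in>{j - i + 1..j}.
             PB2 N (coord N m j k) (coord N m i (k + r)) L
               = - coord N m j k L * coord N m i (k + r) L
                 - coord N m (i + r) k L * coord N m (j - r) (k + r) L)))
     \<and> (\<forall>i\<in>{0..int m}. \<forall>j\<in>{0..int m}. \<forall>l::int.
          \<not> listed N m i k j l \<and> \<not> listed N m j l i k
          \<longrightarrow> PB2 N (coord N m i k) (coord N m j l) L = 0))"
proof -
  show ?thesis (is "?submanifold \<and> (\<forall>L\<in>Tset N m. \<forall>k. ?table L k)")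
  proof
    show ?submanifold
      by (rule Tset_poisson_submanifold) (use assms in auto)
    show "\<forall>L\<in>Tset N m. \<forall>k. ?table L k"
    proof (intro ballI allI)
      fix L k assume "L \<in> Tset N m"
      then obtain b a where L: "L = Tmat N m b a"
        unfolding Tset_def by blast
      interpret Tmat_point_distinct N m b a
        by unfold_locales (use assms in auto)
      show "?table L k"
        unfolding L
        by (auto simp: PB2_b_b_succ PB2_b_a_succ PB2_a_b_shift PB2_b_a_same PB2_a_b_end
            PB2_a_a_shift PB2_a_a_same PB2_a_a_end PB2_a_a_overlap PB2_a_a_overlap_rev
            PB2_coord_Tmat_unlisted)
    qed
  qed
qed

end
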